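(* Let $A$ be a unital C*-algebra and $\mathcal H$ a countably or finitely generated Hilbert $A$-module. If $\mathcal H$ possesses an orthogonal standard Riesz basis, then $\mathcal H$ possesses an orthogonal standard Riesz basis $\{x_j : j\in\mathbb J\}$ with $\langle x_j,x_j\rangle=\langle x_j,x_j\rangle^2$ for every $j\in\mathbb J$, i.e. an orthogonal Hilbert basis that is a standard normalized tight frame.
   Context: A (left) Hilbert $A$-module is a left $A$-module $\mathcal H$ with an $A$-valued inner product $\langle\cdot,\cdot\rangle$, $A$-linear in the first argument, with $\langle x,y\rangle=\langle y,x\rangle^*$, $\langle x,x\rangle\ge0$ and $=0$ only for $x=0$, complete in $\|x\|=\|\langle x,x\rangle\|^{1/2}$. Finitely generated: every element is an $A$-linear combination of finitely many fixed elements; countably generated: some countable subset has norm-dense $A$-linear span. A sequence $\{x_j:j\in\mathbb J\}$ ($\mathbb J$ finite or countable) is a frame if there are $C,D>0$ with $C\langle x,x\rangle\le\sum_j\langle x,x_j\rangle\langle x_j,x\rangle\le D\langle x,x\rangle$ for all $x$; normalized tight if $C=D=1$ works; standard if this series converges in norm for all $x$. A standard Riesz basis is a frame whose $A$-linear span is norm-dense and such that an $A$-linear combination $\sum_{j\in S}a_jx_j$ ($a_j\in A$) is zero only if every summand $a_jx_j$ is zero. A Hilbert basis is a set with norm-dense $A$-linear span satisfying the same zero-representation uniqueness property and $\|x_j\|=1$ for all $j$. Orthogonal means $\langle x_i,x_j\rangle=0$ for $i\neq j$. *)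

theory Defs
  imports "HOL-Analysis.Analysis"
begin

text \<open>A unital C*-algebra is modelled on a type 'a of class real_normed_algebra_1 and banach
  (ring structure, unit with norm 1, complete norm), together with an explicit complex scalar
  multiplication sc and an involution star.\<close>

definition cstar_algebra :: "(complex \<Rightarrow> 'a::{real_normed_algebra_1,banach} \<Rightarrow> 'a) \<Rightarrow> ('a \<Rightarrow> 'a) \<Rightarrow> bool" where
  "cstar_algebra sc star \<longleftrightarrow>
     (\<forall>c a b. sc c (a + b) = sc c a + sc c b) \<and>
     (\<forall>c d a. sc (c + d) a = sc c a + sc d a) \<and>
     (\<forall>c d a. sc (c * d) a = sc c (sc d a)) \<and>
     (\<forall>r a. sc (complex_of_real r) a = scaleR r a) \<and>
     (\<forall>c a b. sc c (a * b) = sc c a * b \<and> sc c (a * b) = a * sc c b) \<and>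
     (\<forall>c a. norm (sc c a) = cmod c * norm a) \<and>
     (\<forall>a. star (star a) = a) \<and>
     (\<forall>a b. star (a + b) = star a + star b) \<and>
     (\<forall>c a. star (sc c a) = sc (cnj c) (star a)) \<and>
     (\<forall>a b. star (a * b) = star b * star a) \<and>
     (\<forall>a. norm (star a * a) = (norm a)\<^sup>2)"

definition alg_spectrum :: "(complex \<Rightarrow> 'a::real_normed_algebra_1 \<Rightarrow> 'a) \<Rightarrow> 'a \<Rightarrow> complex set" where
  "alg_spectrum sc a = {z. \<not> (\<exists>b. (a - sc z 1) * b = 1 \<and> b * (a - sc z 1) = 1)}"

definition cpos :: "(complex \<Rightarrow> 'a::real_normed_algebra_1 \<Rightarrow> 'a) \<Rightarrow> ('a \<Rightarrow> 'a) \<Rightarrow> 'a \<Rightarrow> bool" where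
  "cpos sc star a \<longleftrightarrow> star a = a \<and> alg_spectrum sc a \<subseteq> {z. Im z = 0 \<and> 0 \<le> Re z}"

definition cle :: "(complex \<Rightarrow> 'a::real_normed_algebra_1 \<Rightarrow> 'a) \<Rightarrow> ('a \<Rightarrow> 'a) \<Rightarrow> 'a \<Rightarrow> 'a \<Rightarrow> bool" where
  "cle sc star a b \<longleftrightarrow> cpos sc star (b - a)"

definition hnorm :: "('h \<Rightarrow> 'h \<Rightarrow> 'a::real_normed_algebra_1) \<Rightarrow> 'h \<Rightarrow> real" where
  "hnorm ip x = sqrt (norm (ip x x))"

definition hclosure :: "('h::ab_group_add \<Rightarrow> 'h \<Rightarrow> 'a::real_normed_algebra_1) \<Rightarrow> 'h set \<Rightarrow> 'h set" where
  "hclosure ip S = {x. \<exists>f. (\<forall>n. f n \<in> S) \<and> (\<lambda>n. hnorm ip (f n - x)) \<longlonglongrightarrow> 0}"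

text \<open>Left Hilbert A-module structure on the whole type 'h (the module H is UNIV).\<close>
definition hilbert_module :: "(complex \<Rightarrow> 'a::{real_normed_algebra_1,banach} \<Rightarrow> 'a) \<Rightarrow> ('a \<Rightarrow> 'a)
    \<Rightarrow> ('a \<Rightarrow> 'h::ab_group_add \<Rightarrow> 'h) \<Rightarrow> ('h \<Rightarrow> 'h \<Rightarrow> 'a) \<Rightarrow> bool" where
  "hilbert_module sc star act ip \<longleftrightarrow>
     (\<forall>a b x. act (a + b) x = act a x + act b x) \<and>
     (\<forall>a x y. act a (x + y) = act a x + act a y) \<and>
     (\<forall>a b x. act (a * b) x = act a (act b x)) \<and>
     (\<forall>x. act 1 x = x) \<and>
     (\<forall>x y z. ip (x + y) z = ip x z + ip y z) \<and>
     (\<forall>a x y. ip (act a x) y = a * ip x y) \<and>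
     (\<forall>x y. ip x y = star (ip y x)) \<and>
     (\<forall>x. cpos sc star (ip x x)) \<and>
     (\<forall>x. ip x x = 0 \<longrightarrow> x = 0) \<and>
     (\<forall>f::nat \<Rightarrow> 'h. (\<forall>e>0. \<exists>N. \<forall>m\<ge>N. \<forall>n\<ge>N. hnorm ip (f m - f n) < e)
        \<longrightarrow> (\<exists>x. (\<lambda>n. hnorm ip (f n - x)) \<longlonglongrightarrow> 0))"

definition alin_span :: "('a \<Rightarrow> 'h::ab_group_add \<Rightarrow> 'h) \<Rightarrow> ('i \<Rightarrow> 'h) \<Rightarrow> 'i set \<Rightarrow> 'h set" where
  "alin_span act xs J = {(\<Sum>j\<in>F. act (c j) (xs j)) | F c. finite F \<and> F \<subseteq> J}"

definition finitely_generated :: "('a \<Rightarrow> 'h::ab_group_add \<Rightarrow> 'h) \<Rightarrow> bool" where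
  "finitely_generated act \<longleftrightarrow> (\<exists>G. finite G \<and> alin_span act id G = UNIV)"

definition countably_generated :: "('a \<Rightarrow> 'h::ab_group_add \<Rightarrow> 'h) \<Rightarrow> ('h \<Rightarrow> 'h \<Rightarrow> 'a::real_normed_algebra_1) \<Rightarrow> bool" where
  "countably_generated act ip \<longleftrightarrow> (\<exists>G. countable G \<and> hclosure ip (alin_span act id G) = UNIV)"

definition standard_frame :: "(complex \<Rightarrow> 'a::{real_normed_algebra_1,banach} \<Rightarrow> 'a) \<Rightarrow> ('a \<Rightarrow> 'a)
    \<Rightarrow> ('h \<Rightarrow> 'h \<Rightarrow> 'a) \<Rightarrow> (nat \<Rightarrow> 'h) \<Rightarrow> nat set \<Rightarrow> bool" where
  "standard_frame sc star ip xs J \<longleftrightarrow>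
     (\<exists>C D::real. C > 0 \<and> D > 0 \<and>
       (\<forall>x. \<exists>s. ((\<lambda>j. ip x (xs j) * ip (xs j) x) has_sum s) J \<and>
              cle sc star (scaleR C (ip x x)) s \<and> cle sc star s (scaleR D (ip x x))))"

definition normalized_tight_standard_frame :: "('h \<Rightarrow> 'h \<Rightarrow> 'a::{real_normed_algebra_1,banach}) \<Rightarrow> (nat \<Rightarrow> 'h) \<Rightarrow> nat set \<Rightarrow> bool" where
  "normalized_tight_standard_frame ip xs J \<longleftrightarrow>
     (\<forall>x. ((\<lambda>j. ip x (xs j) * ip (xs j) x) has_sum ip x x) J)"

definition unique_zero_repr :: "('a::zero \<Rightarrow> 'h::ab_group_add \<Rightarrow> 'h) \<Rightarrow> (nat \<Rightarrow> 'h) \<Rightarrow> nat set \<Rightarrow> bool" where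
  "unique_zero_repr act xs J \<longleftrightarrow>
     (\<forall>S a. finite S \<and> S \<subseteq> J \<and> (\<Sum>j\<in>S. act (a j) (xs j)) = 0 \<longrightarrow> (\<forall>j\<in>S. act (a j) (xs j) = 0))"

definition standard_riesz_basis :: "(complex \<Rightarrow> 'a::{real_normed_algebra_1,banach} \<Rightarrow> 'a) \<Rightarrow> ('a \<Rightarrow> 'a)
    \<Rightarrow> ('a \<Rightarrow> 'h::ab_group_add \<Rightarrow> 'h) \<Rightarrow> ('h \<Rightarrow> 'h \<Rightarrow> 'a) \<Rightarrow> (nat \<Rightarrow> 'h) \<Rightarrow> nat set \<Rightarrow> bool" where
  "standard_riesz_basis sc star act ip xs J \<longleftrightarrow>
     standard_frame sc star ip xs J \<and> hclosure ip (alin_span act xs J) = UNIV \<and> unique_zero_repr act xs J"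

definition hilbert_basis :: "('a::{real_normed_algebra_1,banach} \<Rightarrow> 'h::ab_group_add \<Rightarrow> 'h) \<Rightarrow> ('h \<Rightarrow> 'h \<Rightarrow> 'a)
    \<Rightarrow> (nat \<Rightarrow> 'h) \<Rightarrow> nat set \<Rightarrow> bool" where
  "hilbert_basis act ip xs J \<longleftrightarrow>
     hclosure ip (alin_span act xs J) = UNIV \<and> unique_zero_repr act xs J \<and> (\<forall>j\<in>J. hnorm ip (xs j) = 1)"

definition orthogonal_family :: "('h \<Rightarrow> 'h \<Rightarrow> 'a::zero) \<Rightarrow> (nat \<Rightarrow> 'h) \<Rightarrow> nat set \<Rightarrow> bool" where
  "orthogonal_family ip xs J \<longleftrightarrow> (\<forall>i\<in>J. \<forall>j\<in>J. i \<noteq> j \<longrightarrow> ip (xs i) (xs j) = 0)"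

end

theory Submission
  imports Defs "HOL-Computational_Algebra.Fundamental_Theorem_Algebra"
    "HOL-Computational_Algebra.Formal_Power_Series"
begin

(*
  Let x_j be an orthogonal standard Riesz basis with frame bounds C, D and a_j = <x_j, x_j>.
  Evaluating the frame inequality at x = x_j, orthogonality leaves only the term a_j a_j, so
  C a_j <= a_j^2 <= D a_j and the spectrum of a_j lies in {0} \<union> [C, D]. Because of this gap
  the powers of u = 1 - a_j / D converge to a projection q (onto the kernel of a_j), v = u - q
  has norm < 1, and b_j = (1 - v)^(-1/2) (1 - q) / sqrt D is a self-adjoint inverse square root
  of a_j on its support: b_j a_j b_j = 1 - q and a_j b_j^2 a_j = a_j. The vectors b_j x_j
  are orthogonal with projections as inner products and recover x_j = (a_j b_j) (b_j x_j), so
  they still span densely; for such a family the Bessel defect of x is dominated by that of any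
  nearby finite combination, which gives Parseval's identity.

  The spectral estimates behind this, chiefly that the norm of a self-adjoint element is bounded
  by its spectral radius, follow from the C*-identity and Rickart's elementary proof that the
  powers of x are bounded when 1 - l x is invertible for all |l| <= 1.
*)

section \<open>Invertible elements and the Neumann series\<close>

definition invertible_elem :: "'a::ring_1 \<Rightarrow> bool" where
  "invertible_elem x \<longleftrightarrow> (\<exists>y. x * y = 1 \<and> y * x = 1)"

lemma right_inverse_eq_left_inverse: "(x::'a::ring_1) * y = 1 \<Longrightarrow> z * x = 1 \<Longrightarrow> y = z"
  by (metis mult.assoc mult_1_left mult_1_right)

lemma invertible_elem_1 [simp]: "invertible_elem 1"
  unfolding invertible_elem_def by auto

lemma invertible_elem_mult: "invertible_elem x \<Longrightarrow> invertible_elem y \<Longrightarrow> invertible_elem (x * y)"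
  unfolding invertible_elem_def by (metis mult.assoc mult_1_left)

lemma invertible_elem_power: "invertible_elem x \<Longrightarrow> invertible_elem (x ^ n)"
  by (induction n) (simp_all add: invertible_elem_mult)

lemma invertible_elem_uminus_iff [simp]: "invertible_elem (- x) \<longleftrightarrow> invertible_elem x"
  unfolding invertible_elem_def by (metis minus_mult_minus minus_minus)

lemma invertible_elem_scaleR:
  "invertible_elem (x::'a::real_normed_algebra_1) \<Longrightarrow> r \<noteq> 0 \<Longrightarrow> invertible_elem (scaleR r x)"
  unfolding invertible_elem_def
  by (metis mult_scaleR_left mult_scaleR_right right_inverse scaleR_one scaleR_scaleR)

lemma invertible_elem_commuting_factor:
  assumes comm: "x * y = y * x" and inv: "invertible_elem (x * y)"
  shows "invertible_elem x"
proof -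
  obtain w where w: "x * y * w = 1" "w * (x * y) = 1"
    using inv unfolding invertible_elem_def by blast
  have right: "x * (y * w) = 1" using w(1) by (simp add: mult.assoc)
  have left: "(w * y) * x = 1" using w(2) comm by (simp add: mult.assoc)
  have "y * w = w * y" by (rule right_inverse_eq_left_inverse[OF right left])
  then show ?thesis unfolding invertible_elem_def using right left by metis
qed

lemma geometric_sum_left: "(1 - (z::'a::ring_1)) * (\<Sum>i<n. z ^ i) = 1 - z ^ n"
proof (induction n)
  case (Suc n)
  have "(1 - z) * (\<Sum>i<Suc n. z ^ i) = (1 - z) * (\<Sum>i<n. z ^ i) + (1 - z) * z ^ n"
    by (simp add: distrib_left)
  also have "\<dots> = 1 - z ^ Suc n" using Suc by (simp add: algebra_simps)
  finally show ?case .
qed simp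

lemma geometric_sum_right: "(\<Sum>i<n. z ^ i) * (1 - (z::'a::ring_1)) = 1 - z ^ n"
proof (induction n)
  case (Suc n)
  have "(\<Sum>i<Suc n. z ^ i) * (1 - z) = (\<Sum>i<n. z ^ i) * (1 - z) + z ^ n * (1 - z)"
    by (simp add: distrib_right)
  also have "\<dots> = 1 - z ^ Suc n" using Suc by (simp add: algebra_simps power_commutes)
  finally show ?case .
qed simp

lemma neumann_series:
  fixes y :: "'a::{real_normed_algebra_1,banach}"
  assumes y: "norm y < 1"
  shows "(1 - y) * (\<Sum>n. y ^ n) = 1" "(\<Sum>n. y ^ n) * (1 - y) = 1"
    and "norm ((\<Sum>n. y ^ n) - 1) \<le> norm y / (1 - norm y)"
proof -
  have sum: "summable (\<lambda>n. y ^ n)" by (rule complete_algebra_summable_geometric[OF y])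
  have partial: "(\<lambda>n. \<Sum>i<n. y ^ i) \<longlonglongrightarrow> (\<Sum>n. y ^ n)" using sum by (rule summable_LIMSEQ)
  have "(\<lambda>n. y ^ n) \<longlonglongrightarrow> 0" by (rule LIMSEQ_power_zero[OF y])
  then have one: "(\<lambda>n. 1 - y ^ n) \<longlonglongrightarrow> 1"
    using tendsto_diff[OF tendsto_const] by fastforce
  show "(1 - y) * (\<Sum>n. y ^ n) = 1"
    using LIMSEQ_unique[OF tendsto_mult[OF tendsto_const partial]] one
    by (simp add: geometric_sum_left)
  show "(\<Sum>n. y ^ n) * (1 - y) = 1"
    using LIMSEQ_unique[OF tendsto_mult[OF partial tendsto_const]] one
    by (simp add: geometric_sum_right)
  have "(\<Sum>n. y ^ n) - 1 = (\<Sum>n. y ^ Suc n)"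
    using suminf_split_head[OF sum] by simp
  also have "norm \<dots> \<le> (\<Sum>n. norm y ^ Suc n)"
    using y by (intro norm_suminf_le) (simp_all add: norm_power_ineq summable_geometric summable_Suc_iff del: power_Suc)
  also have "\<dots> = norm y / (1 - norm y)"
    using y suminf_mult[of "\<lambda>n. norm y ^ n" "norm y"] by (simp add: suminf_geometric divide_simps)
  finally show "norm ((\<Sum>n. y ^ n) - 1) \<le> norm y / (1 - norm y)" .
qed

lemma norm_inverse_minus_one_le:
  fixes y g :: "'a::{real_normed_algebra_1,banach}"
  assumes y: "norm y \<le> 1/2" and g: "(1 - y) * g = 1"
  shows "norm (g - 1) \<le> 2 * norm y"
proof -
  have y1: "norm y < 1" using y by simp
  have "g = (\<Sum>n. y ^ n)" by (rule right_inverse_eq_left_inverse[OF g neumann_series(2)[OF y1]])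
  then have "norm (g - 1) \<le> norm y / (1 - norm y)"
    using neumann_series(3)[OF y1] by simp
  also have "\<dots> \<le> norm y / (1/2)"
    using y by (intro divide_left_mono) auto
  also have "\<dots> = 2 * norm y" by simp
  finally show ?thesis .
qed

lemma inverse_perturbation:
  fixes u v w :: "'a::{real_normed_algebra_1,banach}"
  assumes uv: "u * v = 1" "v * u = 1" and small: "norm (w - u) * norm v \<le> 1/2"
  shows "\<exists>v'. w * v' = 1 \<and> v' * w = 1 \<and> norm (v' - v) \<le> 2 * norm v ^ 2 * norm (w - u)"
proof -
  define y where "y = v * (u - w)"
  have ny: "norm y \<le> norm v * norm (w - u)"
    unfolding y_def by (metis norm_minus_commute norm_mult_ineq)
  then have ny2: "norm y < 1" "norm y \<le> 1/2" using small by (simp_all add: mult.commute)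
  have wu: "w = u * (1 - y)"
    unfolding y_def by (simp add: algebra_simps mult.assoc[symmetric] uv)
  define g where "g = (\<Sum>n. y ^ n)"
  have g: "(1 - y) * g = 1" "g * (1 - y) = 1"
    using neumann_series[OF ny2(1)] unfolding g_def by auto
  have "w * (g * v) = u * ((1 - y) * g) * v" and "(g * v) * w = g * (v * u) * (1 - y)"
    by (simp_all add: wu mult.assoc)
  then have inv: "w * (g * v) = 1" "(g * v) * w = 1" using g uv by simp_all
  have "norm (g * v - v) \<le> norm (g - 1) * norm v"
    by (metis left_diff_distrib mult_1_left norm_mult_ineq)
  also have "\<dots> \<le> 2 * (norm v * norm (w - u)) * norm v"
    using norm_inverse_minus_one_le[OF ny2(2) g(1)] ny by (intro mult_right_mono) auto
  also have "\<dots> = 2 * norm v ^ 2 * norm (w - u)" by (simp add: power2_eq_square)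
  finally show ?thesis using inv by blast
qed

lemma continuous_on_inverse_elem:
  fixes g f :: "'b::metric_space \<Rightarrow> 'a::{real_normed_algebra_1,banach}"
  assumes cont: "continuous_on S g" and inv: "\<And>l. l \<in> S \<Longrightarrow> g l * f l = 1 \<and> f l * g l = 1"
  shows "continuous_on S f"
  unfolding continuous_on_iff
proof (intro ballI allI impI)
  fix l0 e assume l0: "l0 \<in> S" and e: "(0::real) < e"
  define K where "K = norm (f l0)"
  define \<epsilon> where "\<epsilon> = min (1 / (2 * (K + 1))) (e / (2 * (K\<^sup>2 + 1)))"
  have K: "0 \<le> K" unfolding K_def by simp
  have "\<epsilon> > 0" unfolding \<epsilon>_def using K e by (simp add: add_nonneg_pos)
  then obtain d where d: "d > 0" "\<And>l. l \<in> S \<Longrightarrow> dist l l0 < d \<Longrightarrow> dist (g l) (g l0) < \<epsilon>"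
    using cont l0 unfolding continuous_on_iff by blast
  show "\<exists>d>0. \<forall>l\<in>S. dist l l0 < d \<longrightarrow> dist (f l) (f l0) < e"
  proof (intro exI conjI ballI impI, fact d(1))
    fix l assume l: "l \<in> S" "dist l l0 < d"
    have close: "norm (g l - g l0) < \<epsilon>" using d(2)[OF l] by (simp add: dist_norm)
    have "norm (g l - g l0) * K \<le> 1 / (2 * (K + 1)) * (K + 1)"
      using close K by (intro mult_mono) (auto simp: \<epsilon>_def)
    also have "\<dots> = 1/2" using K by simp
    finally have "norm (g l - g l0) * norm (f l0) \<le> 1/2" by (simp add: K_def)
    then obtain v' where v': "g l * v' = 1" "v' * g l = 1"
        "norm (v' - f l0) \<le> 2 * K\<^sup>2 * norm (g l - g l0)"
      using inverse_perturbation[of "g l0" "f l0" "g l"] inv[OF l0] unfolding K_def by blast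
    have "v' = f l" using right_inverse_eq_left_inverse[OF v'(1)] inv[OF l(1)] by simp
    then have "dist (f l) (f l0) \<le> 2 * K\<^sup>2 * norm (g l - g l0)" using v'(3) by (simp add: dist_norm)
    also have "\<dots> \<le> 2 * K\<^sup>2 * \<epsilon>" using close by (intro mult_left_mono) auto
    also have "\<dots> \<le> 2 * K\<^sup>2 * (e / (2 * (K\<^sup>2 + 1)))" by (intro mult_left_mono) (auto simp: \<epsilon>_def)
    also have "\<dots> = e * (K\<^sup>2 / (K\<^sup>2 + 1))"
      using add_nonneg_pos[of "K\<^sup>2" 1] by (simp add: field_simps)
    also have "\<dots> < e"
      using e add_nonneg_pos[of "K\<^sup>2" 1] mult_strict_left_mono[of "K\<^sup>2 / (K\<^sup>2 + 1)" 1 e]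
      by simp
    finally show "dist (f l) (f l0) < e" .
  qed
qed

section \<open>Power-bounded elements and roots of unity\<close>

definition power_bounded :: "'a::real_normed_algebra_1 \<Rightarrow> bool" where
  "power_bounded x \<longleftrightarrow> (\<exists>M. \<forall>n. norm (x ^ n) \<le> M)"

lemma power_bounded_if_norm_le_one: "norm x \<le> 1 \<Longrightarrow> power_bounded x"
  unfolding power_bounded_def
  by (meson norm_power_ineq order_trans power_le_one norm_ge_zero)

lemma power_bounded_if_eventually_le:
  assumes "\<And>n. N \<le> n \<Longrightarrow> norm (x ^ n) \<le> B"
  shows "power_bounded x"
proof -
  have "norm (x ^ n) \<le> \<bar>B\<bar> + (\<Sum>m<N. norm (x ^ m))" for n
  proof (cases "N \<le> n")
    case True
    then show ?thesis using assms[OF True] by (smt (verit) sum_nonneg norm_ge_zero)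
  next
    case False
    then have "norm (x ^ n) \<le> (\<Sum>m<N. norm (x ^ m))" by (intro member_le_sum) auto
    then show ?thesis by linarith
  qed
  then show ?thesis unfolding power_bounded_def by blast
qed

lemma power_bounded_scaleR_tendsto_zero:
  assumes "power_bounded (scaleR r x)" and s: "0 \<le> s" "s < r"
  shows "(\<lambda>n. (scaleR s x) ^ n) \<longlonglongrightarrow> 0"
proof -
  obtain M where M: "\<And>n. norm ((scaleR r x) ^ n) \<le> M"
    using assms(1) unfolding power_bounded_def by blast
  have r: "0 < r" using s by simp
  have bound: "norm ((scaleR s x) ^ n) \<le> (s / r) ^ n * M" for n
  proof -
    have "norm ((scaleR s x) ^ n) = (s / r) ^ n * (r ^ n * norm (x ^ n))"
      using s r by (simp add: power_abs power_divide)
    also have "\<dots> \<le> (s / r) ^ n * M"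
      using M[of n] s r by (intro mult_left_mono) (simp_all add: power_abs)
    finally show ?thesis .
  qed
  have "(\<lambda>n. (s / r) ^ n * M) \<longlonglongrightarrow> 0"
    using s by (intro tendsto_mult_left_zero LIMSEQ_power_zero) auto
  then show ?thesis by (rule Lim_null_comparison[OF always_eventually, OF allI, OF bound])
qed

lemma norm_average_diff_le:
  fixes g h :: "nat \<Rightarrow> 'a::real_normed_vector"
  assumes "n \<ge> 1" "\<And>k. k < n \<Longrightarrow> norm (g k - h k) \<le> e"
  shows "norm (scaleR (1 / real n) (\<Sum>k<n. g k) - scaleR (1 / real n) (\<Sum>k<n. h k)) \<le> e"
proof -
  have "norm (\<Sum>k<n. g k - h k) \<le> real n * e"
    using norm_sum[of "\<lambda>k. g k - h k" "{..<n}"] sum_mono[of "{..<n}" "\<lambda>k. norm (g k - h k)" "\<lambda>_. e"] assms(2)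
    by simp
  then show ?thesis
    using assms(1) by (simp add: sum_subtractf divide_simps mult.commute flip: scaleR_diff_right)
qed

definition unity_root :: "nat \<Rightarrow> nat \<Rightarrow> complex" where
  "unity_root n k = exp (2 * of_real pi * \<i> * of_nat k / of_nat n)"

lemma unity_root_power: "n \<ge> 1 \<Longrightarrow> unity_root n k ^ n = 1"
  unfolding unity_root_def using complex_root_unity by simp

lemma norm_unity_root [simp]: "cmod (unity_root n k) = 1"
  unfolding unity_root_def by simp

lemma unity_root_power_commute: "unity_root n k ^ m = unity_root n m ^ k"
  unfolding unity_root_def exp_of_nat_mult[symmetric] by (simp add: algebra_simps)

lemma sum_unity_root_power:
  assumes "n \<ge> 1" "m < n"
  shows "(\<Sum>k<n. unity_root n k ^ m) = (if m = 0 then of_nat n else 0)"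
proof (cases "m = 0")
  case False
  have "unity_root n m \<noteq> 1" unfolding unity_root_def
    using complex_root_unity_eq_1[OF assms(1), of m] False assms(2)
    by (simp add: nat_dvd_not_less)
  then have "(\<Sum>k<n. unity_root n m ^ k) = 0"
    using unity_root_power[OF assms(1), of m] by (simp add: sum_gp_strict)
  then show ?thesis using False by (simp add: unity_root_power_commute)
qed simp

section \<open>Spectrum and positivity in a C*-algebra\<close>

locale cstar =
  fixes sc :: "complex \<Rightarrow> 'a::{real_normed_algebra_1,banach} \<Rightarrow> 'a"
    and star :: "'a \<Rightarrow> 'a"
  assumes cstar_algebra: "cstar_algebra sc star"
begin

lemma sc_add_right: "sc c (a + b) = sc c a + sc c b"
  using cstar_algebra unfolding cstar_algebra_def by simp
lemma sc_add_left: "sc (c + d) a = sc c a + sc d a"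
  using cstar_algebra unfolding cstar_algebra_def by simp
lemma sc_sc: "sc (c * d) a = sc c (sc d a)"
  using cstar_algebra unfolding cstar_algebra_def by simp
lemma sc_of_real: "sc (complex_of_real r) a = scaleR r a"
  using cstar_algebra unfolding cstar_algebra_def by simp
lemma sc_mult_left: "sc c (a * b) = sc c a * b"
  using cstar_algebra unfolding cstar_algebra_def by simp
lemma sc_mult_right: "sc c (a * b) = a * sc c b"
  using cstar_algebra unfolding cstar_algebra_def by blast
lemma norm_sc: "norm (sc c a) = cmod c * norm a"
  using cstar_algebra unfolding cstar_algebra_def by simp
lemma star_star [simp]: "star (star a) = a"
  using cstar_algebra unfolding cstar_algebra_def by simp
lemma star_add: "star (a + b) = star a + star b"
  using cstar_algebra unfolding cstar_algebra_def by simp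
lemma star_sc: "star (sc c a) = sc (cnj c) (star a)"
  using cstar_algebra unfolding cstar_algebra_def by simp
lemma star_mult: "star (a * b) = star b * star a"
  using cstar_algebra unfolding cstar_algebra_def by simp
lemma cstar_identity: "norm (star a * a) = (norm a)\<^sup>2"
  using cstar_algebra unfolding cstar_algebra_def by simp

lemma sc_0_left [simp]: "sc 0 a = 0" using sc_of_real[of 0 a] by simp
lemma sc_0_right [simp]: "sc c 0 = 0" using sc_add_right[of c 0 0] by simp
lemma sc_1_left [simp]: "sc 1 a = a" using sc_of_real[of 1 a] by simp
lemma sc_minus_left: "sc (- c) a = - sc c a"
  using sc_add_left[of "-c" c a] by (simp add: eq_neg_iff_add_eq_0)
lemma sc_diff_left: "sc (c - d) a = sc c a - sc d a"
  using sc_add_left[of c "-d" a] sc_minus_left by simp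
lemma sc_diff_right: "sc c (a - b) = sc c a - sc c b"
  by (metis add_diff_cancel diff_add_cancel sc_add_right)
lemma sc_one_mult: "sc c 1 * x = sc c x" using sc_mult_left[of c 1 x] by simp
lemma mult_sc_one: "x * sc c 1 = sc c x" using sc_mult_right[of c x 1] by simp
lemma sc_mult_sc: "sc c a * sc d b = sc (c * d) (a * b)"
  by (metis sc_mult_left sc_mult_right sc_sc)
lemma sc_scaleR: "sc c (scaleR r a) = scaleR r (sc c a)"
  by (metis mult.commute sc_of_real sc_sc)
lemma scaleR_sc: "scaleR r (sc c a) = sc (of_real r * c) a"
  by (metis sc_of_real sc_sc)
lemma sc_power: "(sc c x) ^ n = sc (c ^ n) (x ^ n)"
  by (induction n) (simp_all add: sc_mult_sc)
lemma sc_sum_left: "sc (\<Sum>i\<in>S. f i) a = (\<Sum>i\<in>S. sc (f i) a)"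
  by (induction S rule: infinite_finite_induct) (simp_all add: sc_add_left)
lemma sc_of_nat: "sc (of_nat n) a = of_nat n * a"
  using sc_of_real[of "real n" a] by (simp add: scaleR_conv_of_real)

lemma invertible_elem_sc_one: "c \<noteq> 0 \<Longrightarrow> invertible_elem (sc c 1)"
  unfolding invertible_elem_def by (rule exI[of _ "sc (1/c) 1"]) (simp add: sc_mult_sc)

lemma star_0 [simp]: "star 0 = 0" using star_add[of 0 0] by simp
lemma star_1 [simp]: "star 1 = 1" using star_mult[of "star 1" 1] by simp
lemma star_minus: "star (- a) = - star a"
  using star_add[of "-a" a] by (simp add: eq_neg_iff_add_eq_0)
lemma star_diff: "star (a - b) = star a - star b"
  using star_add[of a "-b"] star_minus by simp
lemma star_scaleR: "star (scaleR r a) = scaleR r (star a)"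
  using star_sc[of "of_real r" a] by (simp add: sc_of_real)
lemma star_sc_one: "star (sc c 1) = sc (cnj c) 1" using star_sc[of c 1] by simp
lemma star_power: "star (a ^ n) = (star a) ^ n"
  by (induction n) (simp_all add: star_mult power_commutes)

lemma norm_star [simp]: "norm (star a) = norm a"
proof -
  have le: "norm b \<le> norm (star b)" for b
  proof (cases "b = 0")
    case False
    have "(norm b)\<^sup>2 \<le> norm (star b) * norm b" using cstar_identity[of b] norm_mult_ineq by metis
    then show ?thesis using False by (simp add: power2_eq_square)
  qed simp
  show ?thesis using le[of a] le[of "star a"] by simp
qed

lemma bounded_linear_star: "bounded_linear star"
  by (rule bounded_linear_intro[of _ 1]) (simp_all add: star_add star_scaleR)

lemma norm_power_two_power_selfadjoint:
  "star h = h \<Longrightarrow> norm (h ^ (2 ^ m)) = norm h ^ (2 ^ m)"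
proof (induction m)
  case (Suc m)
  have "star (h ^ (2 ^ m)) = h ^ (2 ^ m)" using Suc by (simp add: star_power)
  then have "norm (h ^ (2 ^ m) * h ^ (2 ^ m)) = (norm (h ^ (2 ^ m)))\<^sup>2"
    using cstar_identity[of "h ^ (2 ^ m)"] by simp
  then show ?case using Suc by (simp add: power_add[symmetric] mult_2 power2_eq_square)
qed simp

abbreviation spec :: "'a \<Rightarrow> complex set" where
  "spec x \<equiv> alg_spectrum sc x"

lemma mem_spectrum_iff: "z \<in> spec x \<longleftrightarrow> \<not> invertible_elem (x - sc z 1)"
  unfolding alg_spectrum_def invertible_elem_def by simp

lemma spectrum_translate: "z \<in> spec x \<longleftrightarrow> z + c \<in> spec (x + sc c 1)"
proof -
  have "(x + sc c 1) - sc (z + c) 1 = x - sc z 1" by (simp add: sc_add_left)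
  then show ?thesis unfolding mem_spectrum_iff by metis
qed

lemma invertible_if_norm_less:
  assumes "norm x < cmod z"
  shows "invertible_elem (x - sc z 1)"
proof -
  have z: "z \<noteq> 0" using assms by auto
  have "norm (sc (1/z) x) < 1" using assms z by (simp add: norm_sc norm_divide divide_simps)
  then have "invertible_elem (1 - sc (1/z) x)"
    using neumann_series(1,2) unfolding invertible_elem_def by blast
  then have "invertible_elem (sc (-z) 1 * (1 - sc (1/z) x))"
    using invertible_elem_mult invertible_elem_sc_one z by (metis neg_equal_0_iff_equal)
  moreover have "sc (-z) 1 * (1 - sc (1/z) x) = x - sc z 1"
    using z by (simp add: right_diff_distrib sc_one_mult sc_sc[symmetric] sc_minus_left)
  ultimately show ?thesis by simp
qed

lemma norm_spectrum_le: "z \<in> spec x \<Longrightarrow> cmod z \<le> norm x"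
  using invertible_if_norm_less mem_spectrum_iff not_le by blast

lemma norm_selfadjoint_plus_imaginary:
  assumes h: "star h = h"
  shows "(norm (h + sc (\<i> * of_real t) 1))\<^sup>2 \<le> (norm h)\<^sup>2 + t\<^sup>2"
proof -
  let ?c = "\<i> * complex_of_real t"
  have "star (h + sc ?c 1) * (h + sc ?c 1) = (h - sc ?c 1) * (h + sc ?c 1)"
    using h by (simp add: star_add star_sc_one sc_minus_left)
  also have "\<dots> = h * h - sc (?c * ?c) 1"
    by (simp add: left_diff_distrib distrib_left sc_one_mult mult_sc_one sc_diff_right sc_sc[symmetric])
  also have "?c * ?c = - complex_of_real (t\<^sup>2)" by (simp add: power2_eq_square algebra_simps)
  finally have "star (h + sc ?c 1) * (h + sc ?c 1) = h * h + sc (complex_of_real (t\<^sup>2)) 1"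
    by (simp add: sc_minus_left)
  then have "(norm (h + sc ?c 1))\<^sup>2 = norm (h * h + sc (complex_of_real (t\<^sup>2)) 1)"
    using cstar_identity[of "h + sc ?c 1"] by simp
  also have "\<dots> \<le> norm (h * h) + t\<^sup>2"
    using norm_triangle_ineq[of "h * h" "sc (complex_of_real (t\<^sup>2)) 1"] by (simp add: norm_sc norm_power)
  also have "norm (h * h) \<le> (norm h)\<^sup>2" by (simp add: power2_eq_square norm_mult_ineq)
  finally show ?thesis by simp
qed

lemma selfadjoint_spectrum_real:
  assumes h: "star h = h" and z: "z \<in> spec h"
  shows "Im z = 0"
proof (rule ccontr)
  assume im: "Im z \<noteq> 0"
  define t where "t = ((norm h)\<^sup>2 + 1) / (2 * Im z)"
  let ?c = "\<i> * complex_of_real t"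
  have "z + ?c \<in> spec (h + sc ?c 1)" using z spectrum_translate by blast
  then have "(cmod (z + ?c))\<^sup>2 \<le> (norm (h + sc ?c 1))\<^sup>2"
    by (simp add: norm_spectrum_le power_mono)
  then have "(Re z)\<^sup>2 + (Im z + t)\<^sup>2 \<le> (norm h)\<^sup>2 + t\<^sup>2"
    using norm_selfadjoint_plus_imaginary[OF h, of t] by (simp add: cmod_power2)
  then have "(Im z)\<^sup>2 + 2 * t * Im z \<le> (norm h)\<^sup>2"
    by (simp add: power2_eq_square algebra_simps) (smt (verit) zero_le_square)
  moreover have "2 * t * Im z = (norm h)\<^sup>2 + 1" using im unfolding t_def by simp
  ultimately show False by (smt (verit) zero_le_power2)
qed

lemma continuous_on_sc_left: "continuous_on S (\<lambda>l. sc l x)"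
proof -
  have "bounded_linear (\<lambda>l. sc l x)"
    by (rule bounded_linear_intro[of _ "norm x"])
      (simp_all add: sc_add_left scaleR_conv_of_real sc_sc sc_of_real norm_sc)
  then show ?thesis by (rule linear_continuous_on)
qed

text \<open>Rickart's argument: averaging the resolvent \<open>f\<close> over the \<open>n\<close>-th roots of unity inverts
  \<open>1 - (r x)^n\<close>. If the powers of \<open>r x\<close> are bounded, that average is close to 1 for large \<open>n\<close>,
  and by uniform continuity of \<open>f\<close> so is the average at any radius within \<open>\<delta>\<close>; hence the
  bound propagates from \<open>r\<close> to \<open>r + \<delta>/2\<close> and, in finitely many steps, to 1.\<close>

lemma unity_root_average_inverse:
  assumes n: "n \<ge> 1"
    and inv: "\<And>k. k < n \<Longrightarrow> (1 - sc (unity_root n k) y) * F k = 1 \<and> F k * (1 - sc (unity_root n k) y) = 1"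
  defines "A \<equiv> scaleR (1 / real n) (\<Sum>k<n. F k)"
  shows "(1 - y ^ n) * A = 1" "A * (1 - y ^ n) = 1"
proof -
  define G where "G k = (\<Sum>m<n. (sc (unity_root n k) y) ^ m)" for k
  have power_n: "(sc (unity_root n k) y) ^ n = y ^ n" for k
    unfolding sc_power unity_root_power[OF n] by simp
  have FG: "F k * (1 - y ^ n) = G k" "(1 - y ^ n) * F k = G k" if "k < n" for k
  proof -
    have "F k * (1 - y ^ n) = (F k * (1 - sc (unity_root n k) y)) * G k"
      unfolding G_def mult.assoc geometric_sum_left power_n ..
    then show "F k * (1 - y ^ n) = G k" using inv[OF that] by simp
    have "(1 - y ^ n) * F k = G k * ((1 - sc (unity_root n k) y) * F k)"
      unfolding G_def mult.assoc[symmetric] geometric_sum_right power_n ..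
    then show "(1 - y ^ n) * F k = G k" using inv[OF that] by simp
  qed
  have "(\<Sum>k<n. G k) = (\<Sum>m<n. \<Sum>k<n. sc (unity_root n k ^ m) (y ^ m))"
    unfolding G_def sc_power by (rule sum.swap)
  also have "\<dots> = (\<Sum>m<n. sc (\<Sum>k<n. unity_root n k ^ m) (y ^ m))"
    by (simp add: sc_sum_left)
  also have "\<dots> = (\<Sum>m<n. if m = 0 then sc (of_nat n) 1 else 0)"
    by (rule sum.cong) (simp_all add: sum_unity_root_power[OF n])
  also have "\<dots> = of_nat n" using n by (simp add: sc_of_nat)
  also have "(of_nat n :: 'a) = scaleR (real n) 1" by (simp add: scaleR_conv_of_real)
  finally have "scaleR (1 / real n) (\<Sum>k<n. G k) = 1" using n by simp
  moreover have "A * (1 - y ^ n) = scaleR (1 / real n) (\<Sum>k<n. G k)"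
    "(1 - y ^ n) * A = scaleR (1 / real n) (\<Sum>k<n. G k)"
    unfolding A_def using FG by (simp_all add: sum_distrib_left sum_distrib_right)
  ultimately show "(1 - y ^ n) * A = 1" "A * (1 - y ^ n) = 1" by simp_all
qed

lemma resolvent_average_inverse:
  assumes inv: "\<And>l. cmod l \<le> 1 \<Longrightarrow> (1 - sc l x) * f l = 1 \<and> f l * (1 - sc l x) = 1"
    and n: "n \<ge> 1" and \<rho>: "0 \<le> \<rho>" "\<rho> \<le> 1"
  defines "A \<equiv> scaleR (1 / real n) (\<Sum>k<n. f (of_real \<rho> * unity_root n k))"
  shows "(1 - (scaleR \<rho> x) ^ n) * A = 1" "A * (1 - (scaleR \<rho> x) ^ n) = 1"
proof -
  have "cmod (of_real \<rho> * unity_root n k) \<le> 1" for k using \<rho> by (simp add: norm_mult)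
  then have "(1 - sc (unity_root n k) (scaleR \<rho> x)) * f (of_real \<rho> * unity_root n k) = 1 \<and>
      f (of_real \<rho> * unity_root n k) * (1 - sc (unity_root n k) (scaleR \<rho> x)) = 1" for k
    using inv by (simp add: sc_scaleR scaleR_sc)
  from unity_root_average_inverse[OF n, of "scaleR \<rho> x", OF this]
  show "(1 - (scaleR \<rho> x) ^ n) * A = 1" "A * (1 - (scaleR \<rho> x) ^ n) = 1"
    unfolding A_def by simp_all
qed

lemma power_bounded_step:
  assumes inv: "\<And>l. cmod l \<le> 1 \<Longrightarrow> (1 - sc l x) * f l = 1 \<and> f l * (1 - sc l x) = 1"
    and unif: "\<And>l m. cmod l \<le> 1 \<Longrightarrow> cmod m \<le> 1 \<Longrightarrow> dist m l < \<delta> \<Longrightarrow> dist (f m) (f l) < 1/4"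
    and bounded: "power_bounded (scaleR r x)"
    and s: "0 \<le> s" "s < r" "r \<le> 1" and t: "0 \<le> t" "t \<le> 1" "\<bar>t - s\<bar> < \<delta>"
  shows "power_bounded (scaleR t x)"
proof -
  have "(\<lambda>n. norm ((scaleR s x) ^ n)) \<longlonglongrightarrow> 0"
    by (rule tendsto_norm_zero[OF power_bounded_scaleR_tendsto_zero[OF bounded s(1,2)]])
  then obtain N where N: "\<And>n. n \<ge> N \<Longrightarrow> norm ((scaleR s x) ^ n) < 1/8"
    using order_tendstoD(2)[of _ 0 sequentially "1/8"] unfolding eventually_sequentially by force
  have "norm ((scaleR t x) ^ n) \<le> 1" if n: "n \<ge> max N 1" for n
  proof -
    define A where "A \<rho> = scaleR (1 / real n) (\<Sum>k<n. f (of_real \<rho> * unity_root n k))" for \<rho>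
    note A = resolvent_average_inverse[OF inv, of n, folded A_def]
    have "norm (A s - 1) \<le> 2 * norm ((scaleR s x) ^ n)"
      using N[of n] n A(1)[of s] s by (intro norm_inverse_minus_one_le) auto
    then have close_1: "norm (A s - 1) \<le> 1/4" using N[of n] n by simp
    have "norm (f (of_real t * unity_root n k) - f (of_real s * unity_root n k)) \<le> 1/4" for k
    proof -
      have "dist (of_real t * unity_root n k) (of_real s * unity_root n k) = \<bar>t - s\<bar>"
        by (simp add: dist_norm norm_mult flip: left_diff_distrib of_real_diff)
      then show ?thesis using unif[of "of_real s * unity_root n k" "of_real t * unity_root n k"] s t
        by (simp add: dist_norm norm_mult)
    qed
    then have "norm (A t - A s) \<le> 1/4"
      unfolding A_def using n by (intro norm_average_diff_le) auto
    then have "norm (1 - A t) \<le> 1/2"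
      using close_1 norm_triangle_ineq[of "A s - 1" "A t - A s"] by (simp add: norm_minus_commute)
    moreover have "(1 - (1 - A t)) * (1 - (scaleR t x) ^ n) = 1" using A(2) n t by simp
    ultimately have "norm ((1 - (scaleR t x) ^ n) - 1) \<le> 2 * (1/2)"
      by (smt (verit) norm_inverse_minus_one_le)
    then show ?thesis by simp
  qed
  then show ?thesis by (rule power_bounded_if_eventually_le)
qed

theorem power_bounded_if_invertible_on_disc:
  assumes inv: "\<And>l. cmod l \<le> 1 \<Longrightarrow> invertible_elem (1 - sc l x)"
  shows "power_bounded x"
proof -
  define f where "f l = (SOME y. (1 - sc l x) * y = 1 \<and> y * (1 - sc l x) = 1)" for l
  have f: "(1 - sc l x) * f l = 1 \<and> f l * (1 - sc l x) = 1" if "cmod l \<le> 1" for l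
    unfolding f_def using inv[OF that] unfolding invertible_elem_def by (rule someI_ex)
  have "continuous_on (cball 0 1) f"
    by (rule continuous_on_inverse_elem[of _ "\<lambda>l. 1 - sc l x"])
      (use f in \<open>auto intro: continuous_on_diff continuous_on_const continuous_on_sc_left\<close>)
  then have "uniformly_continuous_on (cball 0 1) f"
    by (rule compact_uniformly_continuous[OF _ compact_cball])
  then obtain \<delta> where \<delta>: "\<delta> > 0"
    "\<And>l m. cmod l \<le> 1 \<Longrightarrow> cmod m \<le> 1 \<Longrightarrow> dist m l < \<delta> \<Longrightarrow> dist (f m) (f l) < 1/4"
    unfolding uniformly_continuous_on_def by (metis mem_cball_0 zero_less_divide_1_iff zero_less_numeral)
  define r0 where "r0 = 1 / (norm x + 1)"
  have nx: "0 < norm x + 1" by (simp add: add_nonneg_pos)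
  then have r0: "0 < r0" "r0 \<le> 1" unfolding r0_def by simp_all
  define \<rho> where "\<rho> k = min 1 (r0 + real k * \<delta> / 2)" for k
  have "power_bounded (scaleR (\<rho> k) x)" for k
  proof (induction k)
    case 0
    have "norm (scaleR r0 x) \<le> 1" using nx unfolding r0_def by (simp add: divide_simps)
    then show ?case using r0 unfolding \<rho>_def by (simp add: power_bounded_if_norm_le_one)
  next
    case (Suc k)
    have pos: "0 < \<rho> k" and le1: "\<rho> k \<le> 1" "\<rho> (Suc k) \<le> 1"
      using r0 \<delta>(1) unfolding \<rho>_def by (simp_all add: add_pos_nonneg)
    have "real (Suc k) * \<delta> / 2 = real k * \<delta> / 2 + \<delta> / 2"
      by (simp add: field_simps)
    then have mono: "\<rho> k \<le> \<rho> (Suc k)" "\<rho> (Suc k) \<le> \<rho> k + \<delta> / 2"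
      using \<delta>(1) unfolding \<rho>_def by (simp_all only: min_def split: if_split) linarith+
    then have close: "\<bar>\<rho> (Suc k) - max 0 (\<rho> k - \<delta> / 4)\<bar> < \<delta>"
      using \<delta>(1) pos by (auto simp: max_def abs_if)
    show ?case
      by (rule power_bounded_step[OF f \<delta>(2) Suc _ _ le1(1) _ le1(2) close]) (use pos mono \<delta>(1) in auto)
  qed
  moreover obtain k :: nat where "2 / \<delta> < real k" using reals_Archimedean2 by blast
  then have "\<rho> k = 1" using r0 \<delta>(1) unfolding \<rho>_def by (simp add: divide_simps mult.commute)
  ultimately show ?thesis by (metis scaleR_one)
qed

lemma norm_le_one_if_power_bounded:
  assumes h: "star h = h" and bounded: "power_bounded h"
  shows "norm h \<le> 1"
proof (rule ccontr)
  assume "\<not> norm h \<le> 1"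
  then have gt: "1 < norm h" by simp
  obtain M where M: "\<And>n. norm (h ^ n) \<le> M" using bounded unfolding power_bounded_def by blast
  obtain n where "M < norm h ^ n" using real_arch_pow[OF gt] by blast
  also have "\<dots> \<le> norm h ^ (2 ^ n)"
    using gt by (intro power_increasing less_imp_le[OF less_exp]) simp_all
  also have "\<dots> = norm (h ^ (2 ^ n))" by (rule norm_power_two_power_selfadjoint[OF h, symmetric])
  finally show False using M[of "2 ^ n"] by simp
qed

lemma norm_selfadjoint_le_spectral_bound:
  assumes h: "star h = h" and s: "0 \<le> s" and sp: "\<And>z. z \<in> spec h \<Longrightarrow> cmod z \<le> s"
  shows "norm h \<le> s"
proof (rule ccontr)
  assume "\<not> norm h \<le> s"
  define \<rho> where "\<rho> = (s + norm h) / 2"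
  have \<rho>: "s < \<rho>" "\<rho> < norm h" "0 < \<rho>" using \<open>\<not> norm h \<le> s\<close> s unfolding \<rho>_def by auto
  define x where "x = scaleR (1 / \<rho>) h"
  have "invertible_elem (1 - sc l x)" if l: "cmod l \<le> 1" for l
  proof (cases "l = 0")
    case False
    have "\<rho> \<le> \<rho> / cmod l" using l False \<rho> by (simp add: divide_simps)
    then have "of_real \<rho> / l \<notin> spec h" using sp \<rho> by (force simp: norm_divide)
    then have "invertible_elem (sc (- l / of_real \<rho>) 1 * (h - sc (of_real \<rho> / l) 1))"
      using False \<rho> by (intro invertible_elem_mult invertible_elem_sc_one) (auto simp: mem_spectrum_iff)
    moreover have "sc (- l / of_real \<rho>) 1 * (h - sc (of_real \<rho> / l) 1) = 1 - sc l x"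
      using False \<rho> unfolding x_def
      by (simp add: right_diff_distrib sc_one_mult sc_mult_sc sc_scaleR scaleR_sc sc_minus_left
          divide_inverse mult_ac)
    ultimately show ?thesis by simp
  qed simp
  then have "norm x \<le> 1"
    using h by (intro norm_le_one_if_power_bounded power_bounded_if_invertible_on_disc)
      (simp_all add: x_def star_scaleR)
  then show False using \<rho> unfolding x_def by (simp add: divide_simps)
qed

abbreviation pos :: "'a \<Rightarrow> bool" where
  "pos a \<equiv> cpos sc star a"

lemma pos_iff: "pos a \<longleftrightarrow> star a = a \<and> (\<forall>z\<in>spec a. Im z = 0 \<and> 0 \<le> Re z)"
  unfolding cpos_def by auto

lemma spectrum_reflect: "z \<in> spec (scaleR t 1 - p) \<longleftrightarrow> of_real t - z \<in> spec p"
proof -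
  have "(scaleR t 1 - p) - sc z 1 = - (p - sc (of_real t - z) 1)"
    by (simp add: sc_diff_left sc_of_real)
  then show ?thesis unfolding mem_spectrum_iff by (metis invertible_elem_uminus_iff)
qed

lemma pos_0: "pos 0"
proof -
  have "z = 0" if "z \<in> spec 0" for z
    using that invertible_elem_sc_one[of z] by (auto simp: mem_spectrum_iff)
  then show ?thesis unfolding pos_iff by fastforce
qed

lemma pos_iff_norm_le:
  assumes p: "star p = p" and t: "norm p \<le> t"
  shows "pos p \<longleftrightarrow> norm (scaleR t 1 - p) \<le> t"
proof
  assume P: "pos p"
  show "norm (scaleR t 1 - p) \<le> t"
  proof (rule norm_selfadjoint_le_spectral_bound)
    show "star (scaleR t 1 - p) = scaleR t 1 - p" by (simp add: star_diff star_scaleR p)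
    show "0 \<le> t" using t norm_ge_zero order_trans by blast
    fix z assume "z \<in> spec (scaleR t 1 - p)"
    then have w: "of_real t - z \<in> spec p" by (simp add: spectrum_reflect)
    then have "Im z = 0" "Re z \<le> t" using P unfolding pos_iff by auto
    moreover have "cmod (of_real t - z) \<le> t" using norm_spectrum_le[OF w] t by simp
    ultimately show "cmod z \<le> t" by (simp add: cmod_def)
  qed
next
  assume N: "norm (scaleR t 1 - p) \<le> t"
  have "Im z = 0 \<and> 0 \<le> Re z" if z: "z \<in> spec p" for z
  proof
    show im: "Im z = 0" by (rule selfadjoint_spectrum_real[OF p z])
    have "of_real t - z \<in> spec (scaleR t 1 - p)" using z by (simp add: spectrum_reflect)
    then have "cmod (of_real t - z) \<le> t" using norm_spectrum_le N by fastforce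
    then show "0 \<le> Re z" using im by (simp add: cmod_def)
  qed
  then show "pos p" unfolding pos_iff using p by blast
qed

lemma pos_add:
  assumes a: "pos a" and b: "pos b"
  shows "pos (a + b)"
proof -
  have sa: "star a = a" and sb: "star b = b" using a b unfolding pos_iff by auto
  have "norm (scaleR (norm a) 1 - a) \<le> norm a" "norm (scaleR (norm b) 1 - b) \<le> norm b"
    using pos_iff_norm_le[OF sa] pos_iff_norm_le[OF sb] a b by simp_all
  then have "norm ((scaleR (norm a) 1 - a) + (scaleR (norm b) 1 - b)) \<le> norm a + norm b"
    by (intro order_trans[OF norm_triangle_ineq add_mono])
  moreover have "(scaleR (norm a) 1 - a) + (scaleR (norm b) 1 - b) = scaleR (norm a + norm b) 1 - (a + b)"
    by (simp add: algebra_simps)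
  ultimately have "norm (scaleR (norm a + norm b) 1 - (a + b)) \<le> norm a + norm b" by simp
  moreover have "star (a + b) = a + b" using sa sb by (simp add: star_add)
  ultimately show ?thesis using pos_iff_norm_le norm_triangle_ineq by blast
qed

lemma norm_le_norm_add_pos:
  assumes e: "pos e" and f: "pos f"
  shows "norm e \<le> norm (e + f)"
proof -
  define T where "T = norm (e + f)"
  have g: "pos (e + f)" by (rule pos_add[OF e f])
  then have sg: "star (e + f) = e + f" and se: "star e = e" using e unfolding pos_iff by auto
  have "norm (scaleR T 1 - (e + f)) \<le> T" using pos_iff_norm_le[OF sg] g unfolding T_def by simp
  then have "pos (scaleR T 1 - (e + f))"
    using pos_iff_norm_le[of "scaleR T 1 - (e + f)" T] sg unfolding T_def
    by (simp add: star_diff star_scaleR add.commute)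
  then have "pos ((scaleR T 1 - (e + f)) + f)" by (rule pos_add[OF _ f])
  then have "pos (scaleR T 1 - e)" by (simp add: diff_add_eq_diff_diff_swap)
  show ?thesis unfolding T_def[symmetric]
  proof (rule norm_selfadjoint_le_spectral_bound[OF se])
    show "0 \<le> T" unfolding T_def by simp
    fix z assume z: "z \<in> spec e"
    have "of_real T - (of_real T - z) = z" by simp
    then have "of_real T - z \<in> spec (scaleR T 1 - e)" using z by (simp add: spectrum_reflect)
    then have "Re z \<le> T" using \<open>pos (scaleR T 1 - e)\<close> unfolding pos_iff by auto
    then show "cmod z \<le> T" using e z unfolding pos_iff by (auto simp: cmod_def)
  qed
qed

definition apoly :: "complex poly \<Rightarrow> 'a \<Rightarrow> 'a" where
  "apoly p x = fold_coeffs (\<lambda>c acc. sc c 1 + x * acc) p 0"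

lemma apoly_0 [simp]: "apoly 0 x = 0"
  unfolding apoly_def by simp

lemma apoly_pCons [simp]: "apoly (pCons c p) x = sc c 1 + x * apoly p x"
  by (cases "c = 0 \<and> p = 0") (auto simp: apoly_def)

lemma apoly_add: "apoly (p + q) x = apoly p x + apoly q x"
  by (induction p q rule: poly_induct2) (simp_all add: sc_add_left distrib_left)

lemma apoly_smult: "apoly (smult c p) x = sc c (apoly p x)"
  by (induction p) (simp_all add: sc_add_right sc_mult_right sc_sc)

lemma apoly_mult: "apoly (p * q) x = apoly p x * apoly q x"
  by (induction p) (simp_all add: apoly_add apoly_smult distrib_right sc_one_mult mult.assoc)

lemma apoly_diff: "apoly (p - q) x = apoly p x - apoly q x"
  using apoly_add[of "p - q" q x] by (simp add: eq_diff_eq)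

lemma apoly_power: "apoly (p ^ n) x = (apoly p x) ^ n"
  by (induction n) (simp_all add: apoly_mult one_pCons)

lemma apoly_monom: "apoly (monom 1 n) x = x ^ n"
  by (induction n) (simp_all add: monom_0 monom_Suc)

lemma apoly_commute: "x * apoly p x = apoly p x * x"
  by (induction p) (simp_all add: distrib_left distrib_right sc_one_mult mult_sc_one, metis mult.assoc)

lemma apoly_selfadjoint:
  assumes x: "star x = x" and real: "\<forall>i. cnj (coeff p i) = coeff p i"
  shows "star (apoly p x) = apoly p x"
  using real
proof (induction p)
  case (pCons c p)
  have "cnj c = c" using pCons(3)[rule_format, of 0] by simp
  moreover have "star (apoly p x) = apoly p x"
    using pCons(2) pCons(3) by (metis coeff_pCons_Suc)
  ultimately show ?case by (simp add: star_add star_sc_one star_mult x apoly_commute)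
qed simp

lemma invertible_apoly_prod:
  "finite S \<Longrightarrow> (\<And>z. z \<in> S \<Longrightarrow> invertible_elem (apoly (g z) x)) \<Longrightarrow>
    invertible_elem (apoly (\<Prod>z\<in>S. g z) x)"
  by (induction S rule: finite_induct) (simp_all add: apoly_mult invertible_elem_mult one_pCons)

lemma spectrum_apoly:
  assumes deg: "degree p \<ge> 1" and mu: "\<mu> \<in> spec (apoly p x)"
  shows "\<exists>t\<in>spec x. poly p t = \<mu>"
proof (rule ccontr)
  assume no_root: "\<not> (\<exists>t\<in>spec x. poly p t = \<mu>)"
  define P where "P = p - [:\<mu>:]"
  have "degree P = degree p"
    unfolding P_def using deg degree_add_eq_left[of "[:-\<mu>:]" p] by (simp add: diff_conv_add_uminus)
  then have "P \<noteq> 0" using deg by auto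
  have "invertible_elem (apoly ([:-z, 1:] ^ order z P) x)" if "poly P z = 0" for z
  proof -
    have "z \<notin> spec x" using that no_root unfolding P_def by auto
    then show ?thesis
      by (simp add: apoly_power sc_minus_left invertible_elem_power mem_spectrum_iff)
  qed
  then have "invertible_elem (apoly (\<Prod>z | poly P z = 0. [:-z, 1:] ^ order z P) x)"
    using poly_roots_finite[OF \<open>P \<noteq> 0\<close>] by (intro invertible_apoly_prod) auto
  then have "invertible_elem (sc (lead_coeff P) 1 * apoly (\<Prod>z | poly P z = 0. [:-z, 1:] ^ order z P) x)"
    using \<open>P \<noteq> 0\<close> by (intro invertible_elem_mult invertible_elem_sc_one) simp_all
  also have "sc (lead_coeff P) 1 * apoly (\<Prod>z | poly P z = 0. [:-z, 1:] ^ order z P) x = apoly P x"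
    using complex_poly_decompose[of P] by (metis apoly_smult sc_one_mult)
  also have "apoly P x = apoly p x - sc \<mu> 1" unfolding P_def by (simp add: apoly_diff)
  finally show False using mu mem_spectrum_iff by blast
qed

lemma norm_apoly_le:
  assumes x: "star x = x" and real: "\<forall>i. cnj (coeff p i) = coeff p i" and deg: "degree p \<ge> 1"
    and s: "0 \<le> s" and bound: "\<And>t. t \<in> spec x \<Longrightarrow> cmod (poly p t) \<le> s"
  shows "norm (apoly p x) \<le> s"
proof (rule norm_selfadjoint_le_spectral_bound[OF apoly_selfadjoint[OF x real] s])
  fix z assume "z \<in> spec (apoly p x)"
  then show "cmod z \<le> s" using spectrum_apoly[OF deg] bound by blast
qed

end

section \<open>Inverse square roots on the support of a positive element\<close>

text \<open>The Taylor coefficients of \<open>(1 - v) powr (-1/2)\<close>.\<close>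

definition inv_sqrt_coeff :: "nat \<Rightarrow> real" where
  "inv_sqrt_coeff k = (-1) ^ k * ((-1/2::real) gchoose k)"

lemma abs_inv_sqrt_coeff_le: "\<bar>inv_sqrt_coeff k\<bar> \<le> 1"
proof -
  have "\<bar>(-1/2::real) gchoose k\<bar> \<le> 1"
  proof (induction k)
    case (Suc k)
    have "of_nat (Suc k) * ((-1/2::real) gchoose Suc k) = (-1/2 - of_nat k) * ((-1/2) gchoose k)"
      using gbinomial_mult_1[of "-1/2::real" k] by (simp add: algebra_simps)
    then have "((-1/2::real) gchoose Suc k) = (-1/2 - of_nat k) / of_nat (Suc k) * ((-1/2) gchoose k)"
      by (simp add: field_simps del: of_nat_Suc)
    then have "\<bar>(-1/2::real) gchoose Suc k\<bar> = \<bar>(-1/2 - of_nat k) / of_nat (Suc k)\<bar> * \<bar>(-1/2) gchoose k\<bar>"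
      by (simp add: abs_mult)
    also have "\<dots> \<le> 1 * 1"
      using Suc.IH by (intro mult_mono) (simp_all add: divide_simps)
    finally show ?case by simp
  qed simp
  then show ?thesis unfolding inv_sqrt_coeff_def abs_mult power_abs by simp
qed

lemma inv_sqrt_coeff_convolution: "(\<Sum>i\<le>n. inv_sqrt_coeff i * inv_sqrt_coeff (n - i)) = 1"
proof -
  have "(\<Sum>i\<le>n. inv_sqrt_coeff i * inv_sqrt_coeff (n - i))
      = (-1) ^ n * (\<Sum>i\<le>n. ((-1/2::real) gchoose i) * ((-1/2) gchoose (n - i)))"
    unfolding sum_distrib_left inv_sqrt_coeff_def
    by (intro sum.cong) (simp_all add: power_add[symmetric] mult_ac)
  also have "(\<Sum>i\<le>n. ((-1/2::real) gchoose i) * ((-1/2) gchoose (n - i))) = (-1) gchoose n"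
    using gbinomial_Vandermonde[of "-1/2::real" "-1/2" n] by (simp add: atMost_atLeast0)
  also have "((-1::real) gchoose n) = (-1) ^ n"
    using gbinomial_minus[of "1::real" n] by (simp add: binomial_gbinomial[symmetric])
  finally show ?thesis by (simp add: power_mult_distrib[symmetric])
qed

lemma compression_by_inverse_sqrt:
  fixes e w r :: "'a::ring_1"
  assumes ee: "e * e = e" and ew: "e * w = w * e" and er: "e * r = r * e" and rw: "w * r = r * w"
    and inv: "r * r * w = 1"
  shows "(r * e) * (w * e) * (r * e) = e"
    and "(w * e) * ((r * e) * (r * e)) * (w * e) = w * e"
proof -
  have rules: "e * (e * x) = e * x" "e * (w * x) = w * (e * x)" "e * (r * x) = r * (e * x)"
    "w * (r * x) = r * (w * x)" "r * (r * (w * x)) = x" for x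
    using ee ew er rw inv by (simp_all flip: mult.assoc)
  show "(r * e) * (w * e) * (r * e) = e" "(w * e) * ((r * e) * (r * e)) * (w * e) = w * e"
    by (simp_all add: mult.assoc rules ee ew er rw)
qed

context cstar
begin

lemma inv_sqrt_series:
  assumes v: "norm v < 1"
  defines "r \<equiv> (\<Sum>k. scaleR (inv_sqrt_coeff k) (v ^ k))"
  shows "r * r * (1 - v) = 1"
    and "\<And>w. w * v = v * w \<Longrightarrow> w * r = r * w"
    and "star v = v \<Longrightarrow> star r = r"
proof -
  have "norm (scaleR (inv_sqrt_coeff k) (v ^ k)) \<le> norm v ^ k" for k
    using abs_inv_sqrt_coeff_le[of k] norm_power_ineq[of v k]
    by (simp add: mult_mono' order_trans[OF mult_right_mono])
  then have sa: "summable (\<lambda>k. norm (scaleR (inv_sqrt_coeff k) (v ^ k)))"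
    using v by (intro summable_comparison_test'[OF summable_geometric]) auto
  then have s: "summable (\<lambda>k. scaleR (inv_sqrt_coeff k) (v ^ k))" by (rule summable_norm_cancel)
  have "r * r = (\<Sum>k. \<Sum>i\<le>k. scaleR (inv_sqrt_coeff i) (v ^ i) * scaleR (inv_sqrt_coeff (k - i)) (v ^ (k - i)))"
    unfolding r_def by (rule Cauchy_product[OF sa sa])
  also have "\<dots> = (\<Sum>k. v ^ k)"
  proof (rule suminf_cong)
    fix k
    have "(\<Sum>i\<le>k. scaleR (inv_sqrt_coeff i) (v ^ i) * scaleR (inv_sqrt_coeff (k - i)) (v ^ (k - i)))
        = scaleR (\<Sum>i\<le>k. inv_sqrt_coeff i * inv_sqrt_coeff (k - i)) (v ^ k)"
      unfolding scaleR_sum_left by (intro sum.cong) (simp_all add: power_add[symmetric])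
    then show "(\<Sum>i\<le>k. scaleR (inv_sqrt_coeff i) (v ^ i) * scaleR (inv_sqrt_coeff (k - i)) (v ^ (k - i)))
        = v ^ k" by (simp add: inv_sqrt_coeff_convolution)
  qed
  finally show "r * r * (1 - v) = 1" using neumann_series(2)[OF v] by simp
  show "w * r = r * w" if w: "w * v = v * w" for w
  proof -
    have wk: "w * v ^ k = v ^ k * w" for k
      by (induction k) (simp_all, metis mult.assoc w)
    have "w * r = (\<Sum>k. w * scaleR (inv_sqrt_coeff k) (v ^ k))"
      unfolding r_def by (rule suminf_mult[OF s, symmetric])
    also have "\<dots> = (\<Sum>k. scaleR (inv_sqrt_coeff k) (v ^ k) * w)" by (simp add: wk)
    also have "\<dots> = r * w" unfolding r_def by (rule suminf_mult2[OF s, symmetric])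
    finally show ?thesis .
  qed
  show "star r = r" if sv: "star v = v"
  proof -
    have "star r = (\<Sum>k. star (scaleR (inv_sqrt_coeff k) (v ^ k)))"
      unfolding r_def by (rule bounded_linear.suminf[OF bounded_linear_star s])
    then show ?thesis unfolding r_def by (simp add: star_scaleR star_power sv)
  qed
qed

lemma shifted_mult_shifted: "(a - sc z 1) * (a - sc w 1) = a * a - sc (z + w) a + sc (z * w) 1"
  by (simp add: algebra_simps sc_one_mult mult_sc_one sc_mult_sc sc_add_left sc_diff_right sc_sc)

lemma not_invertible_shifted_mult:
  assumes "z \<in> spec a"
  shows "\<not> invertible_elem ((a - sc z 1) * (a - sc w 1))"
proof
  assume "invertible_elem ((a - sc z 1) * (a - sc w 1))"
  moreover have "(a - sc z 1) * (a - sc w 1) = (a - sc w 1) * (a - sc z 1)"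
    unfolding shifted_mult_shifted by (simp add: add.commute mult.commute)
  ultimately show False
    using assms invertible_elem_commuting_factor mem_spectrum_iff by metis
qed

lemma spectrum_gap:
  assumes pa: "pos a" and lower: "pos (a * a - scaleR C a)" and upper: "pos (scaleR D a - a * a)"
    and z: "z \<in> spec a"
  shows "Im z = 0 \<and> 0 \<le> Re z \<and> (Re z = 0 \<or> (C \<le> Re z \<and> Re z \<le> D))"
proof -
  have im: "Im z = 0" and re: "0 \<le> Re z" using pa z unfolding pos_iff by auto
  define r where "r = Re z"
  have zr: "z = complex_of_real r" unfolding r_def using im by (simp add: complex_eqI)
  have "(a * a - scaleR C a) - sc (z * z - of_real C * z) 1 = (a - sc z 1) * (a - sc (of_real C - z) 1)"
    "(scaleR D a - a * a) - sc (of_real D * z - z * z) 1 = - ((a - sc z 1) * (a - sc (of_real D - z) 1))"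
    unfolding shifted_mult_shifted by (simp_all add: sc_of_real[symmetric] sc_diff_left algebra_simps)
  then have "z * z - of_real C * z \<in> spec (a * a - scaleR C a)"
    "of_real D * z - z * z \<in> spec (scaleR D a - a * a)"
    using not_invertible_shifted_mult[OF z] unfolding mem_spectrum_iff by simp_all
  then have "0 \<le> r * (r - C)" "0 \<le> r * (D - r)"
    using lower upper unfolding pos_iff zr by (auto simp: algebra_simps)
  then have "r = 0 \<or> (C \<le> r \<and> r \<le> D)"
    using re unfolding r_def[symmetric] by (auto simp: zero_le_mult_iff)
  then show ?thesis using im re unfolding r_def by simp
qed

lemma spectrum_gap_rescaled:
  assumes pa: "pos a" and lower: "pos (a * a - scaleR C a)" and upper: "pos (scaleR D a - a * a)"
    and D: "D > 0" and w: "w \<in> spec (1 - scaleR (1 / D) a)"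
  shows "Im w = 0 \<and> (Re w = 1 \<or> (0 \<le> Re w \<and> Re w \<le> 1 - C / D))"
proof -
  define z where "z = complex_of_real D * (1 - w)"
  have "(1 - scaleR (1 / D) a) - sc w 1 = scaleR (- 1 / D) (a - sc z 1)"
    using D unfolding z_def
    by (simp add: scaleR_diff_right scaleR_sc sc_diff_left sc_of_real field_simps)
  then have "z \<in> spec a"
    using w D invertible_elem_scaleR[of "a - sc z 1" "- 1 / D"] unfolding mem_spectrum_iff by auto
  then have "Im z = 0 \<and> 0 \<le> Re z \<and> (Re z = 0 \<or> (C \<le> Re z \<and> Re z \<le> D))"
    by (rule spectrum_gap[OF pa lower upper])
  then show ?thesis
    using D unfolding z_def by (auto simp: field_simps zero_le_mult_iff)
qed

lemma norm_power_diff_le: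
  assumes u: "star u = u" and d: "0 \<le> d" "d < 1"
    and spec: "\<And>t. t \<in> spec u \<Longrightarrow> Im t = 0 \<and> (Re t = 1 \<or> (0 \<le> Re t \<and> Re t \<le> d))"
    and mn: "m < n"
  shows "norm (u ^ m - u ^ n) \<le> d ^ m"
proof -
  define p where "p = monom (1::complex) m - monom 1 n"
  have "coeff p n \<noteq> 0" using mn unfolding p_def by simp
  then have "degree p \<ge> 1" using mn le_degree[of p n] by linarith
  moreover have "\<forall>i. cnj (coeff p i) = coeff p i" unfolding p_def by simp
  moreover have "cmod (poly p t) \<le> d ^ m" if t: "t \<in> spec u" for t
  proof -
    define r where "r = Re t"
    have "t = complex_of_real r" using spec[OF t] unfolding r_def by (simp add: complex_eqI)
    then have "cmod (poly p t) = \<bar>r ^ m - r ^ n\<bar>"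
      unfolding p_def by (simp add: poly_monom flip: of_real_power of_real_diff)
    also have "\<dots> \<le> d ^ m"
    proof (cases "r = 1")
      case False
      then have r: "0 \<le> r" "r \<le> d" using spec[OF t] unfolding r_def by auto
      then have "r ^ n \<le> r ^ m" using d mn by (intro power_decreasing) auto
      then have "\<bar>r ^ m - r ^ n\<bar> \<le> r ^ m" using r by simp
      also have "\<dots> \<le> d ^ m" using r by (simp add: power_mono)
      finally show ?thesis .
    qed (use d in simp)
    finally show ?thesis .
  qed
  ultimately have "norm (apoly p u) \<le> d ^ m"
    using d by (intro norm_apoly_le[OF u]) auto
  then show ?thesis unfolding p_def by (simp add: apoly_diff apoly_monom)
qed

lemma power_limit_projection:
  assumes u: "star u = u" and d: "0 \<le> d" "d < 1"
    and spec: "\<And>t. t \<in> spec u \<Longrightarrow> Im t = 0 \<and> (Re t = 1 \<or> (0 \<le> Re t \<and> Re t \<le> d))"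
  obtains q where "(\<lambda>N. u ^ N) \<longlonglongrightarrow> q" "q * q = q" "star q = q" "u * q = q" "q * u = q"
    "norm (u - q) \<le> d"
proof -
  note diff_le = norm_power_diff_le[OF u d spec]
  have bound: "norm (u ^ Suc k - u ^ k) \<le> d ^ k" for k
    using diff_le[of k "Suc k"] by (simp add: norm_minus_commute)
  have "summable (\<lambda>k. d ^ k)" using d by (simp add: summable_geometric)
  then have "summable (\<lambda>k. norm (u ^ Suc k - u ^ k))"
    by (rule summable_comparison_test') (simp only: real_norm_def abs_norm_cancel bound)
  then have "summable (\<lambda>k. u ^ Suc k - u ^ k)" by (rule summable_norm_cancel)
  then have "(\<lambda>N. 1 + (\<Sum>k<N. u ^ Suc k - u ^ k)) \<longlonglongrightarrow> 1 + (\<Sum>k. u ^ Suc k - u ^ k)"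
    by (intro tendsto_add tendsto_const summable_LIMSEQ)
  moreover have "1 + (\<Sum>k<N. u ^ Suc k - u ^ k) = u ^ N" for N
    using sum_lessThan_telescope[of "\<lambda>k. u ^ k" N] by simp
  ultimately have "(\<lambda>N. u ^ N) \<longlonglongrightarrow> 1 + (\<Sum>k. u ^ Suc k - u ^ k)" by simp
  then obtain q where lim: "(\<lambda>N. u ^ N) \<longlonglongrightarrow> q" ..
  have "(\<lambda>N. u * u ^ N) \<longlonglongrightarrow> u * q" by (intro tendsto_mult tendsto_const lim)
  moreover have "(\<lambda>N. u * u ^ N) \<longlonglongrightarrow> q" using LIMSEQ_Suc[OF lim] by simp
  ultimately have uq: "u * q = q" by (rule LIMSEQ_unique)
  have "(\<lambda>N. u ^ N * u) \<longlonglongrightarrow> q * u" by (intro tendsto_mult tendsto_const lim)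
  moreover have "(\<lambda>N. u ^ N * u) \<longlonglongrightarrow> q" using LIMSEQ_Suc[OF lim] by (simp only: power_Suc2)
  ultimately have qu: "q * u = q" by (rule LIMSEQ_unique)
  have "(\<lambda>N. u ^ N * q) \<longlonglongrightarrow> q * q" by (intro tendsto_mult tendsto_const lim)
  moreover have "u ^ N * q = q" for N by (induction N) (simp_all add: mult.assoc uq)
  ultimately have "(\<lambda>N. q) \<longlonglongrightarrow> q * q" by simp
  then have qq: "q * q = q" using LIMSEQ_const_iff by metis
  have "(\<lambda>N. star (u ^ N)) \<longlonglongrightarrow> star q" by (rule bounded_linear.tendsto[OF bounded_linear_star lim])
  then have "(\<lambda>N. u ^ N) \<longlonglongrightarrow> star q" by (simp add: star_power u)
  then have sq: "star q = q" using lim by (rule LIMSEQ_unique)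
  have "norm (u - q) \<le> d"
  proof (rule Lim_norm_ubound)
    show "(\<lambda>N. u - u ^ N) \<longlonglongrightarrow> u - q" by (intro tendsto_diff tendsto_const lim)
    show "eventually (\<lambda>N. norm (u - u ^ N) \<le> d) sequentially"
      unfolding eventually_sequentially using diff_le[of 1] by (intro exI[of _ 2]) auto
  qed simp
  with lim qq sq uq qu show ?thesis by (rule that)
qed

definition inverse_sqrt_on_support :: "'a \<Rightarrow> 'a \<Rightarrow> bool" where
  "inverse_sqrt_on_support a b \<longleftrightarrow> star b = b \<and> (b * a * b) * (b * a * b) = b * a * b \<and> a * (b * b) * a = a"

theorem exists_inverse_sqrt_on_support:
  assumes pa: "pos a" and lower: "pos (a * a - scaleR C a)" and upper: "pos (scaleR D a - a * a)"
    and C: "C > 0" and D: "D > 0"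
  shows "\<exists>b. inverse_sqrt_on_support a b"
proof -
  have sa: "star a = a" using pa unfolding pos_iff by simp
  define d where "d = max 0 (1 - C / D)"
  have d: "0 \<le> d" "d < 1" unfolding d_def using C D by auto
  define h where "h = scaleR (1 / D) a"
  define u where "u = 1 - h"
  have su: "star u = u" unfolding u_def h_def by (simp add: star_diff star_scaleR sa)
  have "Im t = 0 \<and> (Re t = 1 \<or> (0 \<le> Re t \<and> Re t \<le> d))" if "t \<in> spec u" for t
    using spectrum_gap_rescaled[OF pa lower upper D, of t] that unfolding u_def h_def d_def by auto
  then obtain q where q: "q * q = q" "star q = q" "u * q = q" "q * u = q" "norm (u - q) \<le> d"
    using power_limit_projection[OF su d] by metis
  define v where "v = u - q"
  have v: "norm v < 1" "star v = v" "v * q = 0" "q * v = 0"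
    unfolding v_def using q d by (simp_all add: star_diff su algebra_simps)
  define r where "r = (\<Sum>k. scaleR (inv_sqrt_coeff k) (v ^ k))"
  note r = inv_sqrt_series[OF v(1), folded r_def]
  define e where "e = 1 - q"
  have e: "e * e = e" "e * (1 - v) = (1 - v) * e" "e * r = r * e" "star e = e"
    using q v r(2)[of q] unfolding e_def by (simp_all add: algebra_simps star_diff)
  have h: "h = (1 - v) * e"
    using q unfolding e_def v_def u_def by (simp add: algebra_simps)
  have rv: "(1 - v) * r = r * (1 - v)" using r(2)[of "1 - v"] by (simp add: algebra_simps)
  note compress = compression_by_inverse_sqrt[OF e(1,2,3) rv r(1)]
  define b where "b = scaleR (1 / sqrt D) (r * e)"
  have a: "a = scaleR D h" unfolding h_def using D by simp
  have "b * a * b = scaleR (1 / sqrt D * D * (1 / sqrt D)) ((r * e) * h * (r * e))"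
    unfolding a b_def by simp
  also have "1 / sqrt D * D * (1 / sqrt D) = 1" using D by (simp add: divide_simps)
  finally have bab: "b * a * b = e" unfolding h using compress(1) by simp
  have "a * (b * b) * a = scaleR (D * (1 / sqrt D * (1 / sqrt D)) * D) (h * ((r * e) * (r * e)) * h)"
    unfolding a b_def by simp
  also have "D * (1 / sqrt D * (1 / sqrt D)) * D = D" using D by (simp add: divide_simps)
  finally have "a * (b * b) * a = a" unfolding a h using compress(2) by simp
  moreover have "star b = b" unfolding b_def using e r(3)[OF v(2)] by (simp add: star_scaleR star_mult)
  ultimately show ?thesis using bab e(1) unfolding inverse_sqrt_on_support_def by auto
qed

lemma norm_projection:
  assumes "star p = p" "p * p = p" "p \<noteq> 0"
  shows "norm p = 1"
  using cstar_identity[of p] assms by (simp add: power2_eq_square)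

end

section \<open>Hilbert modules and Parseval's identity\<close>

lemma hclosure_mono: "S \<subseteq> T \<Longrightarrow> hclosure ip S \<subseteq> hclosure ip T"
  unfolding hclosure_def by blast

locale hilbert_cstar_module = cstar sc star
  for sc :: "complex \<Rightarrow> 'a::{real_normed_algebra_1,banach} \<Rightarrow> 'a" and star +
  fixes act :: "'a \<Rightarrow> 'h::ab_group_add \<Rightarrow> 'h" and ip :: "'h \<Rightarrow> 'h \<Rightarrow> 'a"
  assumes hilbert_module: "hilbert_module sc star act ip"
begin

lemma act_add_left: "act (a + b) x = act a x + act b x"
  using hilbert_module unfolding hilbert_module_def by metis
lemma act_add_right: "act a (x + y) = act a x + act a y"
  using hilbert_module unfolding hilbert_module_def by metis
lemma act_mult: "act (a * b) x = act a (act b x)"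
  using hilbert_module unfolding hilbert_module_def by metis
lemma ip_add_left: "ip (x + y) z = ip x z + ip y z"
  using hilbert_module unfolding hilbert_module_def by metis
lemma ip_act_left: "ip (act a x) y = a * ip x y"
  using hilbert_module unfolding hilbert_module_def by metis
lemma ip_sym: "ip x y = star (ip y x)"
  using hilbert_module unfolding hilbert_module_def by metis
lemma ip_self_pos: "pos (ip x x)"
  using hilbert_module unfolding hilbert_module_def by metis
lemma ip_self_eq_0: "ip x x = 0 \<Longrightarrow> x = 0"
  using hilbert_module unfolding hilbert_module_def by metis

lemma act_0_right [simp]: "act a 0 = 0" using act_add_right[of a 0 0] by simp
lemma act_0_left [simp]: "act 0 x = 0" using act_add_left[of 0 0 x] by simp
lemma ip_0_left [simp]: "ip 0 y = 0" using ip_add_left[of 0 0 y] by simp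
lemma act_diff_left: "act (a - b) x = act a x - act b x"
  by (metis act_add_left add_diff_cancel diff_add_cancel)
lemma ip_diff_left: "ip (x - z) y = ip x y - ip z y"
  by (metis ip_add_left add_diff_cancel diff_add_cancel)
lemma ip_sum_left: "ip (\<Sum>i\<in>S. f i) y = (\<Sum>i\<in>S. ip (f i) y)"
  by (induction S rule: infinite_finite_induct) (simp_all add: ip_add_left)
lemma ip_add_right: "ip x (y + z) = ip x y + ip x z"
  by (metis ip_add_left ip_sym star_add)
lemma ip_0_right [simp]: "ip x 0 = 0" using ip_add_right[of x 0 0] by simp
lemma ip_diff_right: "ip x (y - z) = ip x y - ip x z"
  by (metis ip_add_right add_diff_cancel diff_add_cancel)
lemma ip_sum_right: "ip x (\<Sum>i\<in>S. f i) = (\<Sum>i\<in>S. ip x (f i))"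
  by (induction S rule: infinite_finite_induct) (simp_all add: ip_add_right)
lemma ip_act_right: "ip x (act a y) = ip x y * star a"
  by (metis ip_act_left ip_sym star_mult)
lemma ip_self_selfadjoint: "star (ip x x) = ip x x"
  using ip_sym[of x x] by simp

lemma act_eq_self_if_mult_ip:
  assumes c: "c * ip x x = ip x x"
  shows "act c x = x"
proof -
  have "ip x x * star c = ip x x"
    using arg_cong[OF c, of star] by (simp add: star_mult ip_self_selfadjoint)
  then have "ip (x - act c x) (x - act c x) = 0"
    using c by (simp add: ip_diff_left ip_diff_right ip_act_left ip_act_right mult.assoc)
  then show ?thesis using ip_self_eq_0[of "x - act c x"] by simp
qed

definition expansion :: "(nat \<Rightarrow> 'h) \<Rightarrow> nat set \<Rightarrow> 'h \<Rightarrow> 'h" where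
  "expansion y F z = (\<Sum>j\<in>F. act (ip z (y j)) (y j))"

lemma expansion_diff: "expansion y F (z - w) = expansion y F z - expansion y F w"
  unfolding expansion_def by (simp add: ip_diff_left act_diff_left sum_subtractf)

context
  fixes y :: "nat \<Rightarrow> 'h" and K :: "nat set"
  assumes orth: "orthogonal_family ip y K"
    and proj: "\<And>j. j \<in> K \<Longrightarrow> ip (y j) (y j) * ip (y j) (y j) = ip (y j) (y j)"
begin

lemma ip_mult_projection:
  assumes j: "j \<in> K"
  shows "ip z (y j) * ip (y j) (y j) = ip z (y j)"
proof -
  have "act (ip (y j) (y j)) (y j) = y j" by (rule act_eq_self_if_mult_ip[OF proj[OF j]])
  then show ?thesis using ip_act_right[of z "ip (y j) (y j)" "y j"] by (simp add: ip_self_selfadjoint)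
qed

lemma ip_combination_basis:
  assumes F: "finite F" "F \<subseteq> K" and k: "k \<in> K"
  shows "ip (\<Sum>j\<in>F. act (c j) (y j)) (y k) = (if k \<in> F then c k * ip (y k) (y k) else 0)"
proof -
  have "ip (\<Sum>j\<in>F. act (c j) (y j)) (y k) = (\<Sum>j\<in>F. c j * ip (y j) (y k))"
    by (simp add: ip_sum_left ip_act_left)
  also have "\<dots> = (\<Sum>j\<in>F. if j = k then c k * ip (y k) (y k) else 0)"
    using F k orth unfolding orthogonal_family_def by (intro sum.cong) auto
  finally show ?thesis using F by simp
qed

lemma expansion_combination:
  assumes F: "finite F" "F \<subseteq> K" and F0: "F0 \<subseteq> F"
  shows "expansion y F (\<Sum>j\<in>F0. act (c j) (y j)) = (\<Sum>j\<in>F0. act (c j) (y j))"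
proof -
  have "expansion y F (\<Sum>j\<in>F0. act (c j) (y j)) = (\<Sum>k\<in>F. if k \<in> F0 then act (c k) (y k) else 0)"
    unfolding expansion_def
  proof (intro sum.cong refl)
    fix k assume "k \<in> F"
    then have k: "k \<in> K" using F by blast
    have "act (c k * ip (y k) (y k)) (y k) = act (c k) (y k)"
      using act_eq_self_if_mult_ip[OF proj[OF k]] by (simp add: act_mult)
    moreover have "finite F0" "F0 \<subseteq> K" using F F0 finite_subset by auto
    ultimately show "act (ip (\<Sum>j\<in>F0. act (c j) (y j)) (y k)) (y k) = (if k \<in> F0 then act (c k) (y k) else 0)"
      using ip_combination_basis[of F0 k c] k by auto
  qed
  also have "\<dots> = (\<Sum>k\<in>F0. act (c k) (y k))"
    using F F0 by (simp add: sum.inter_restrict[symmetric] Int_absorb1)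
  finally show ?thesis .
qed

lemma bessel_identity:
  fixes z :: 'h
  assumes F: "finite F" "F \<subseteq> K"
  defines "P \<equiv> expansion y F z"
  shows "ip (z - P) (z - P) = ip z z - (\<Sum>j\<in>F. ip z (y j) * ip (y j) z)"
    and "ip z z = ip (z - P) (z - P) + ip P P"
proof -
  let ?s = "\<Sum>j\<in>F. ip z (y j) * ip (y j) z"
  have left: "ip P z = ?s" unfolding P_def expansion_def by (simp add: ip_sum_left ip_act_left)
  have right: "ip z P = ?s"
    unfolding P_def expansion_def by (simp add: ip_sum_right ip_act_right ip_sym[of "y _" z])
  have "ip P (y k) = ip z (y k)" if "k \<in> F" for k
    using ip_combination_basis[OF F, of k] that F ip_mult_projection[of k z]
    unfolding P_def expansion_def by auto
  then have "ip P P = ?s"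
    unfolding P_def expansion_def
    by (simp add: ip_sum_right ip_act_right ip_sym[of "y _" z, symmetric] flip: P_def)
  then show "ip (z - P) (z - P) = ip z z - ?s" "ip z z = ip (z - P) (z - P) + ip P P"
    using left right by (simp_all add: ip_diff_left ip_diff_right)
qed

lemma norm_bessel_defect_le:
  assumes Y: "finite Y" "Y \<subseteq> K" and F0: "F0 \<subseteq> Y"
    and w: "w = (\<Sum>j\<in>F0. act (c j) (y j))"
  shows "norm (ip x x - (\<Sum>j\<in>Y. ip x (y j) * ip (y j) x)) \<le> norm (ip (x - w) (x - w))"
proof -
  define e where "e = x - w"
  have "x - expansion y Y x = e - expansion y Y e"
    unfolding e_def expansion_diff w expansion_combination[OF Y F0] by simp
  then have "norm (ip x x - (\<Sum>j\<in>Y. ip x (y j) * ip (y j) x))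
      = norm (ip (e - expansion y Y e) (e - expansion y Y e))"
    using bessel_identity(1)[OF Y, of x] by simp
  also have "\<dots> \<le> norm (ip (e - expansion y Y e) (e - expansion y Y e) + ip (expansion y Y e) (expansion y Y e))"
    by (rule norm_le_norm_add_pos[OF ip_self_pos ip_self_pos])
  also have "\<dots> = norm (ip e e)" using bessel_identity(2)[OF Y, of e] by simp
  finally show ?thesis unfolding e_def .
qed

theorem parseval_identity:
  assumes dense: "hclosure ip (alin_span act y K) = UNIV"
  shows "((\<lambda>j. ip x (y j) * ip (y j) x) has_sum ip x x) K"
  unfolding has_sum_def tendsto_iff eventually_finite_subsets_at_top
proof (intro allI impI)
  fix \<epsilon> :: real assume \<epsilon>: "\<epsilon> > 0"
  obtain f where f: "\<And>n. f n \<in> alin_span act y K" "(\<lambda>n. hnorm ip (f n - x)) \<longlonglongrightarrow> 0"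
    using dense unfolding hclosure_def by blast
  obtain n where "hnorm ip (f n - x) < sqrt \<epsilon>"
    using order_tendstoD(2)[OF f(2), of "sqrt \<epsilon>"] \<epsilon> unfolding eventually_sequentially by auto
  moreover have "ip (f n - x) (f n - x) = ip (x - f n) (x - f n)"
    by (simp add: ip_diff_left ip_diff_right algebra_simps)
  ultimately have close: "norm (ip (x - f n) (x - f n)) < \<epsilon>"
    unfolding hnorm_def by simp
  obtain F0 c where F0: "finite F0" "F0 \<subseteq> K" and w: "f n = (\<Sum>j\<in>F0. act (c j) (y j))"
    using f(1)[of n] unfolding alin_span_def by blast
  show "\<exists>F0. finite F0 \<and> F0 \<subseteq> K \<and> (\<forall>Y. finite Y \<and> F0 \<subseteq> Y \<and> Y \<subseteq> K \<longrightarrow>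
      dist (\<Sum>j\<in>Y. ip x (y j) * ip (y j) x) (ip x x) < \<epsilon>)"
  proof (intro exI conjI allI impI)
    fix Y assume "finite Y \<and> F0 \<subseteq> Y \<and> Y \<subseteq> K"
    then have "norm (ip x x - (\<Sum>j\<in>Y. ip x (y j) * ip (y j) x)) \<le> norm (ip (x - f n) (x - f n))"
      using norm_bessel_defect_le w by blast
    then show "dist (\<Sum>j\<in>Y. ip x (y j) * ip (y j) x) (ip x x) < \<epsilon>"
      using close by (simp add: dist_norm norm_minus_commute)
  qed (use F0 in auto)
qed

end

lemma orthogonal_frame_gap:
  assumes frame: "standard_frame sc star ip xs J" and orth: "orthogonal_family ip xs J"
  obtains C D where "C > 0" "D > 0"
    "\<And>j. j \<in> J \<Longrightarrow> pos (ip (xs j) (xs j) * ip (xs j) (xs j) - scaleR C (ip (xs j) (xs j)))"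
    "\<And>j. j \<in> J \<Longrightarrow> pos (scaleR D (ip (xs j) (xs j)) - ip (xs j) (xs j) * ip (xs j) (xs j))"
proof -
  obtain C D :: real where CD: "C > 0" "D > 0" and bounds: "\<And>x. \<exists>s.
      ((\<lambda>j. ip x (xs j) * ip (xs j) x) has_sum s) J \<and>
      cle sc star (scaleR C (ip x x)) s \<and> cle sc star s (scaleR D (ip x x))"
    using frame unfolding standard_frame_def by blast
  have "pos (ip (xs j) (xs j) * ip (xs j) (xs j) - scaleR C (ip (xs j) (xs j))) \<and>
      pos (scaleR D (ip (xs j) (xs j)) - ip (xs j) (xs j) * ip (xs j) (xs j))" if j: "j \<in> J" for j
  proof -
    obtain s where s: "((\<lambda>i. ip (xs j) (xs i) * ip (xs i) (xs j)) has_sum s) J"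
      "cle sc star (scaleR C (ip (xs j) (xs j))) s" "cle sc star s (scaleR D (ip (xs j) (xs j)))"
      using bounds[of "xs j"] by blast
    have "ip (xs j) (xs i) * ip (xs i) (xs j) = 0" if "i \<in> J - {j}" for i
      using that j orth unfolding orthogonal_family_def by auto
    then have "((\<lambda>i. ip (xs j) (xs i) * ip (xs i) (xs j)) has_sum s) J \<longleftrightarrow>
        ((\<lambda>i. ip (xs j) (xs i) * ip (xs i) (xs j)) has_sum s) {j}"
      using j by (intro has_sum_cong_neutral) auto
    with s(1) have "((\<lambda>i. ip (xs j) (xs i) * ip (xs i) (xs j)) has_sum s) {j}" by simp
    moreover have "((\<lambda>i. ip (xs j) (xs i) * ip (xs i) (xs j)) has_sum (ip (xs j) (xs j) * ip (xs j) (xs j))) {j}"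
      using has_sum_finite[of "{j}"] by simp
    ultimately have "s = ip (xs j) (xs j) * ip (xs j) (xs j)" by (rule has_sum_unique)
    then show ?thesis using s(2,3) unfolding cle_def by simp
  qed
  with CD that show ?thesis by blast
qed

lemma orthogonal_family_act:
  "orthogonal_family ip xs J \<Longrightarrow> J' \<subseteq> J \<Longrightarrow> orthogonal_family ip (\<lambda>j. act (b j) (xs j)) J'"
  unfolding orthogonal_family_def by (simp add: ip_act_left ip_act_right subset_iff)

lemma alin_span_subset_if_recoverable:
  assumes zero: "\<And>j. j \<in> J \<Longrightarrow> j \<notin> J' \<Longrightarrow> xs j = 0"
    and recover: "\<And>j. j \<in> J \<Longrightarrow> j \<in> J' \<Longrightarrow> xs j = act (c j) (ys j)"
  shows "alin_span act xs J \<subseteq> alin_span act ys J'"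
proof
  fix z assume "z \<in> alin_span act xs J"
  then obtain F a where F: "finite F" "F \<subseteq> J" and z: "z = (\<Sum>j\<in>F. act (a j) (xs j))"
    unfolding alin_span_def by blast
  have "z = (\<Sum>j\<in>F \<inter> J'. act (a j) (xs j))"
    unfolding z using F zero by (intro sum.mono_neutral_right) (auto simp: subset_iff)
  also have "\<dots> = (\<Sum>j\<in>F \<inter> J'. act (a j * c j) (ys j))"
    using F recover by (intro sum.cong) (auto simp: act_mult)
  finally show "z \<in> alin_span act ys J'"
    unfolding alin_span_def mem_Collect_eq using F
    by (intro exI[of _ "F \<inter> J'"] exI[of _ "\<lambda>j. a j * c j"]) auto
qed

lemma unique_zero_repr_act:
  assumes uzr: "unique_zero_repr act xs J" and J': "J' \<subseteq> J"
  shows "unique_zero_repr act (\<lambda>j. act (b j) (xs j)) J'"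
  unfolding unique_zero_repr_def
proof (intro allI impI ballI)
  fix S a j assume S: "finite S \<and> S \<subseteq> J' \<and> (\<Sum>j\<in>S. act (a j) (act (b j) (xs j))) = 0" and j: "j \<in> S"
  then have "(\<Sum>j\<in>S. act (a j * b j) (xs j)) = 0" by (simp add: act_mult)
  then have "act (a j * b j) (xs j) = 0"
    using uzr[unfolded unique_zero_repr_def, rule_format, of S "\<lambda>j. a j * b j" j] S J' j by blast
  then show "act (a j) (act (b j) (xs j)) = 0" by (simp add: act_mult)
qed

lemma hnorm_eq_1_if_ip_projection:
  assumes proj: "ip x x * ip x x = ip x x" and x: "x \<noteq> 0"
  shows "hnorm ip x = 1"
proof -
  have "ip x x \<noteq> 0" using ip_self_eq_0 x by blast
  then have "norm (ip x x) = 1" by (rule norm_projection[OF ip_self_selfadjoint proj])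
  then show ?thesis unfolding hnorm_def by simp
qed

lemma standard_frame_if_normalized_tight:
  assumes "normalized_tight_standard_frame ip ys J"
  shows "standard_frame sc star ip ys J"
proof -
  have "((\<lambda>j. ip x (ys j) * ip (ys j) x) has_sum ip x x) J \<and>
      cle sc star (scaleR 1 (ip x x)) (ip x x) \<and> cle sc star (ip x x) (scaleR 1 (ip x x))" for x
    using assms pos_0 unfolding normalized_tight_standard_frame_def cle_def by simp
  then show ?thesis unfolding standard_frame_def using zero_less_one by blast
qed

lemma orthogonal_frame_normalizers:
  assumes "standard_frame sc star ip xs J" "orthogonal_family ip xs J"
  obtains b where "\<And>j. j \<in> J \<Longrightarrow> inverse_sqrt_on_support (ip (xs j) (xs j)) (b j)"
proof -
  obtain C D where "C > 0" "D > 0"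
    "\<And>j. j \<in> J \<Longrightarrow> pos (ip (xs j) (xs j) * ip (xs j) (xs j) - scaleR C (ip (xs j) (xs j)))"
    "\<And>j. j \<in> J \<Longrightarrow> pos (scaleR D (ip (xs j) (xs j)) - ip (xs j) (xs j) * ip (xs j) (xs j))"
    using orthogonal_frame_gap[OF assms] by blast
  then have "\<forall>j\<in>J. \<exists>b. inverse_sqrt_on_support (ip (xs j) (xs j)) b"
    using exists_inverse_sqrt_on_support[OF ip_self_pos] by blast
  then show ?thesis using that by metis
qed

text \<open>Zero vectors are dropped: a Hilbert basis consists of unit vectors.\<close>

theorem orthogonal_riesz_basis_normalization:
  assumes orth: "orthogonal_family ip xs J" and riesz: "standard_riesz_basis sc star act ip xs J"
    and normalizer: "\<And>j. j \<in> J \<Longrightarrow> inverse_sqrt_on_support (ip (xs j) (xs j)) (b j)"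
  defines "J' \<equiv> {j \<in> J. xs j \<noteq> 0}" and "ys \<equiv> \<lambda>j. act (b j) (xs j)"
  shows "orthogonal_family ip ys J'" "\<forall>j\<in>J'. ip (ys j) (ys j) = ip (ys j) (ys j) * ip (ys j) (ys j)"
    "hclosure ip (alin_span act ys J') = UNIV" "unique_zero_repr act ys J'"
    "\<forall>j\<in>J'. hnorm ip (ys j) = 1" "normalized_tight_standard_frame ip ys J'"
proof -
  have J': "J' \<subseteq> J" unfolding J'_def by blast
  have b: "star (b j) = b j"
      "(b j * ip (xs j) (xs j) * b j) * (b j * ip (xs j) (xs j) * b j) = b j * ip (xs j) (xs j) * b j"
      "ip (xs j) (xs j) * (b j * b j) * ip (xs j) (xs j) = ip (xs j) (xs j)" if "j \<in> J" for j
    using normalizer[OF that] unfolding inverse_sqrt_on_support_def by auto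
  have ip_ys: "ip (ys j) (ys j) = b j * ip (xs j) (xs j) * b j" if "j \<in> J" for j
    unfolding ys_def using b(1)[OF that] by (simp add: ip_act_left ip_act_right mult.assoc)
  have recover: "xs j = act (ip (xs j) (xs j) * b j) (ys j)" if "j \<in> J" for j
    using act_eq_self_if_mult_ip[OF b(3)[OF that]] unfolding ys_def by (simp add: act_mult mult.assoc)
  show orth': "orthogonal_family ip ys J'"
    unfolding ys_def by (rule orthogonal_family_act[OF orth J'])
  show proj: "\<forall>j\<in>J'. ip (ys j) (ys j) = ip (ys j) (ys j) * ip (ys j) (ys j)"
    using ip_ys b(2) J' by auto
  have "alin_span act xs J \<subseteq> alin_span act ys J'"
    by (rule alin_span_subset_if_recoverable[of J J' xs]) (use recover in \<open>auto simp: J'_def\<close>)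
  then show dense: "hclosure ip (alin_span act ys J') = UNIV"
    using hclosure_mono riesz unfolding standard_riesz_basis_def by blast
  show "unique_zero_repr act ys J'"
    unfolding ys_def using unique_zero_repr_act riesz J' unfolding standard_riesz_basis_def by blast
  have "ys j \<noteq> 0" if "j \<in> J'" for j
    using recover[of j] that unfolding J'_def by (metis (mono_tags, lifting) act_0_right mem_Collect_eq)
  then show "\<forall>j\<in>J'. hnorm ip (ys j) = 1"
    using proj by (simp add: hnorm_eq_1_if_ip_projection)
  show "normalized_tight_standard_frame ip ys J'"
    unfolding normalized_tight_standard_frame_def
    using parseval_identity[OF orth' _ dense] proj by simp
qed

end

theorem proposition2p5:
  fixes sc :: "complex \<Rightarrow> 'a::{real_normed_algebra_1,banach} \<Rightarrow> 'a"
    and star :: "'a \<Rightarrow> 'a"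
    and act :: "'a \<Rightarrow> 'h::ab_group_add \<Rightarrow> 'h"
    and ip :: "'h \<Rightarrow> 'h \<Rightarrow> 'a"
  assumes "cstar_algebra sc star"
    and "hilbert_module sc star act ip"
    and "finitely_generated act \<or> countably_generated act ip"
    and "\<exists>(J::nat set) (xs::nat \<Rightarrow> 'h). orthogonal_family ip xs J \<and> standard_riesz_basis sc star act ip xs J"
  shows "\<exists>(J::nat set) (xs::nat \<Rightarrow> 'h).
           orthogonal_family ip xs J \<and> standard_riesz_basis sc star act ip xs J \<and>
           (\<forall>j\<in>J. ip (xs j) (xs j) = ip (xs j) (xs j) * ip (xs j) (xs j)) \<and>
           hilbert_basis act ip xs J \<and> normalized_tight_standard_frame ip xs J"
proof -
  interpret hilbert_cstar_module sc star act ip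
    by unfold_locales (fact assms(1), fact assms(2))
  obtain J xs where orth: "orthogonal_family ip xs J" and riesz: "standard_riesz_basis sc star act ip xs J"
    using assms(4) by blast
  obtain b where "\<And>j. j \<in> J \<Longrightarrow> inverse_sqrt_on_support (ip (xs j) (xs j)) (b j)"
    using orthogonal_frame_normalizers riesz orth unfolding standard_riesz_basis_def by metis
  note normalized = orthogonal_riesz_basis_normalization[OF orth riesz this]
  show ?thesis
    using normalized standard_frame_if_normalized_tight[OF normalized(6)]
    unfolding standard_riesz_basis_def hilbert_basis_def by blast
qed

end
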